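(* Let $(A,\mathfrak m)$ be a complete local Noetherian normal integral domain, and let $I_1,I_2,\dots$ be nonzero prime ideals of $A$ with $\lim_{n\to\infty}I_n=0$ in the $\mathfrak m$-adic topology. Set $P=\prod_n A/I_n$ and $S=\bigoplus_n A/I_n\subseteq P$, let $\iota\colon A\to P$, $\iota(a)=(a+I_1,a+I_2,\dots)$, and let $\pi\colon P\to P/S$ be the natural surjection. Then $\pi\circ\iota\colon A\to P/S$ is a split injection of $A$-modules.
   Context: $\lim_{n\to\infty}I_n=0$ in the $\mathfrak m$-adic topology means: for every $i\ge1$ there is $n_i$ such that $I_n\subseteq\mathfrak m^i$ for all $n\ge n_i$. *)

theory Defs
  imports "HOL-Computational_Algebra.Polynomial" "HOL-Computational_Algebra.Fraction_Field"
begin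

definition is_ideal :: "'a::comm_ring_1 set \<Rightarrow> bool" where
  "is_ideal I \<longleftrightarrow> 0 \<in> I \<and> (\<forall>x\<in>I. \<forall>y\<in>I. x + y \<in> I) \<and> (\<forall>r. \<forall>x\<in>I. r * x \<in> I)"

definition prime_ideal :: "'a::comm_ring_1 set \<Rightarrow> bool" where
  "prime_ideal P \<longleftrightarrow> is_ideal P \<and> P \<noteq> UNIV \<and> (\<forall>a b. a * b \<in> P \<longrightarrow> a \<in> P \<or> b \<in> P)"

definition maximal_ideal :: "'a::comm_ring_1 set \<Rightarrow> bool" where
  "maximal_ideal M \<longleftrightarrow> is_ideal M \<and> M \<noteq> UNIV \<and>
     (\<forall>J. is_ideal J \<and> M \<subseteq> J \<longrightarrow> J = M \<or> J = UNIV)"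

definition ideal_gen :: "'a::comm_ring_1 set \<Rightarrow> 'a set" where
  "ideal_gen S = \<Inter>{J. is_ideal J \<and> S \<subseteq> J}"

fun ideal_pow :: "'a::comm_ring_1 set \<Rightarrow> nat \<Rightarrow> 'a set" where
  "ideal_pow M 0 = UNIV"
| "ideal_pow M (Suc i) = ideal_gen {x * y | x y. x \<in> M \<and> y \<in> ideal_pow M i}"

definition noetherian_ring :: "'a::comm_ring_1 itself \<Rightarrow> bool" where
  "noetherian_ring _ \<longleftrightarrow> (\<forall>I::'a set. is_ideal I \<longrightarrow> (\<exists>F. finite F \<and> I = ideal_gen F))"

definition local_ring_max :: "'a::comm_ring_1 set \<Rightarrow> bool" where
  "local_ring_max M \<longleftrightarrow> maximal_ideal M \<and> (\<forall>J. maximal_ideal J \<longrightarrow> J = M)"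

definition adically_complete :: "'a::comm_ring_1 set \<Rightarrow> bool" where
  "adically_complete M \<longleftrightarrow>
     (\<Inter>i. ideal_pow M i) = {0} \<and>
     (\<forall>x::nat \<Rightarrow> 'a. (\<forall>i. \<exists>N. \<forall>p\<ge>N. \<forall>q\<ge>N. x p - x q \<in> ideal_pow M i) \<longrightarrow>
        (\<exists>L. \<forall>i. \<exists>N. \<forall>n\<ge>N. x n - L \<in> ideal_pow M i))"

definition normal_domain :: "'a::idom itself \<Rightarrow> bool" where
  "normal_domain _ \<longleftrightarrow>
     (\<forall>z::'a fract. (\<exists>p::'a poly. lead_coeff p = 1 \<and> poly (map_poly (\<lambda>a. Fract a 1) p) z = 0)
        \<longrightarrow> (\<exists>a. z = Fract a 1))"

end

theory Submission
  imports Defs "HOL-Library.Set_Algebras"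
begin

text \<open>
  A complete local Noetherian ring \<open>(A, M)\<close> is linearly compact: every \<open>A/M\<^sup>i\<close> is Artinian, so a
  family of cosets of \<open>M\<close>-adically open ideals with the finite intersection property has a common
  point. Call a partial \<open>A\<close>-linear map \<open>A\<^sup>\<nat> \<rightharpoonup> A\<close> approximable if on any finitely many elements of
  its domain it agrees modulo each \<open>M\<^sup>i\<close> with some evaluation of coordinates. Linear compactness
  yields a value at any new vector that keeps the map approximable, so by Zorn's lemma an
  approximable map extends to all of \<open>A\<^sup>\<nat>\<close>. The map \<open>\<iota>(a) + k \<mapsto> a\<close>, with \<open>k n \<in> I n\<close> for almost
  all \<open>n\<close>, is approximable because \<open>I n \<rightarrow> 0\<close>: evaluate at a single large index. Its total
  extension kills \<open>S\<close> and is a left inverse of \<open>\<iota>\<close>, i.e. it splits \<open>\<pi> \<circ> \<iota>\<close>.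
\<close>

section \<open>Ideals\<close>

lemma ideal_zero: "is_ideal I \<Longrightarrow> 0 \<in> I"
  by (simp add: is_ideal_def)

lemma ideal_add: "is_ideal I \<Longrightarrow> x \<in> I \<Longrightarrow> y \<in> I \<Longrightarrow> x + y \<in> I"
  by (simp add: is_ideal_def)

lemma ideal_mult_left: "is_ideal I \<Longrightarrow> x \<in> I \<Longrightarrow> r * x \<in> I"
  by (simp add: is_ideal_def)

lemma ideal_uminus: "is_ideal I \<Longrightarrow> x \<in> I \<Longrightarrow> - x \<in> I"
  using ideal_mult_left[of I x "- 1"] by simp

lemma ideal_diff: "is_ideal I \<Longrightarrow> x \<in> I \<Longrightarrow> y \<in> I \<Longrightarrow> x - y \<in> I"
  using ideal_add[of I x "- y"] ideal_uminus[of I y] by simp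

lemma ideal_eq_UNIV_if_one: "is_ideal I \<Longrightarrow> 1 \<in> I \<Longrightarrow> I = UNIV"
  using ideal_mult_left[of I 1] by auto

lemma is_ideal_UNIV: "is_ideal UNIV"
  by (simp add: is_ideal_def)

lemma is_ideal_Int: "is_ideal I \<Longrightarrow> is_ideal J \<Longrightarrow> is_ideal (I \<inter> J)"
  by (simp add: is_ideal_def)

lemma is_ideal_set_plus:
  assumes I: "is_ideal I" and J: "is_ideal J"
  shows "is_ideal (I + J)"
  unfolding is_ideal_def
proof (intro conjI ballI allI)
  show "0 \<in> I + J"
    using set_plus_intro[OF ideal_zero[OF I] ideal_zero[OF J]] by simp
next
  fix x y assume "x \<in> I + J" "y \<in> I + J"
  then obtain a b a' b' where ab: "x = a + b" "y = a' + b'" "a \<in> I" "b \<in> J" "a' \<in> I" "b' \<in> J"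
    by (auto elim!: set_plus_elim)
  then have "(a + a') + (b + b') \<in> I + J"
    by (intro set_plus_intro ideal_add[OF I] ideal_add[OF J])
  moreover have "x + y = (a + a') + (b + b')"
    using ab by (simp add: ac_simps)
  ultimately show "x + y \<in> I + J"
    by simp
next
  fix r x assume "x \<in> I + J"
  then obtain a b where ab: "x = a + b" "a \<in> I" "b \<in> J"
    by (auto elim!: set_plus_elim)
  then have "r * a + r * b \<in> I + J"
    by (intro set_plus_intro ideal_mult_left[OF I] ideal_mult_left[OF J])
  then show "r * x \<in> I + J"
    by (simp add: ab distrib_left)
qed

lemma set_plus_ideal_least: "is_ideal C \<Longrightarrow> A \<subseteq> C \<Longrightarrow> B \<subseteq> C \<Longrightarrow> A + B \<subseteq> C"
  by (auto elim!: set_plus_elim intro: ideal_add)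

lemma subset_set_plus_ideal: "is_ideal J \<Longrightarrow> X \<subseteq> X + J"
  using set_plus_intro[of _ X 0 J] by (auto dest: ideal_zero)

lemma is_ideal_principal: "is_ideal {r * g | r. True}"
  unfolding is_ideal_def
proof (intro conjI ballI allI)
  show "0 \<in> {r * g | r. True}"
    by (metis (mono_tags) mem_Collect_eq mult_zero_left)
  show "x + y \<in> {r * g | r. True}" if "x \<in> {r * g | r. True}" "y \<in> {r * g | r. True}" for x y
    using that by (auto simp: distrib_right[symmetric])
  show "s * x \<in> {r * g | r. True}" if "x \<in> {r * g | r. True}" for s x
    using that by (auto simp: mult.assoc[symmetric])
qed

lemma is_ideal_ideal_gen: "is_ideal (ideal_gen S)"
  unfolding ideal_gen_def is_ideal_def by auto

lemma ideal_gen_subset: "S \<subseteq> ideal_gen S"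
  unfolding ideal_gen_def by auto

lemma ideal_gen_least: "is_ideal J \<Longrightarrow> S \<subseteq> J \<Longrightarrow> ideal_gen S \<subseteq> J"
  unfolding ideal_gen_def by auto

lemma ideal_gen_mono: "S \<subseteq> T \<Longrightarrow> ideal_gen S \<subseteq> ideal_gen T"
  by (meson is_ideal_ideal_gen ideal_gen_least ideal_gen_subset order_trans)

lemma ideal_gen_insert_elem:
  assumes "v \<in> W + ideal_gen (insert g F)" and W: "is_ideal W"
  obtains v' r where "v' \<in> W + ideal_gen F" "v = v' + r * g"
proof -
  let ?P = "{r * g | r. True}"
  have "g \<in> ?P"
    by (rule CollectI, rule exI[of _ 1]) simp
  then have "g \<in> ideal_gen F + ?P"
    using set_zero_plus2[of "ideal_gen F" ?P] ideal_zero[OF is_ideal_ideal_gen] by blast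
  moreover have "F \<subseteq> ideal_gen F + ?P"
    using ideal_gen_subset[of F] subset_set_plus_ideal[OF is_ideal_principal, of "ideal_gen F" g]
    by (rule order_trans)
  ultimately have "ideal_gen (insert g F) \<subseteq> ideal_gen F + ?P"
    by (intro ideal_gen_least is_ideal_set_plus is_ideal_ideal_gen is_ideal_principal) simp
  then have "W + ideal_gen (insert g F) \<subseteq> W + (ideal_gen F + ?P)"
    by (rule set_plus_mono2[OF subset_refl])
  with assms(1) obtain w u where "v = w + u" "w \<in> W" "u \<in> ideal_gen F + ?P"
    by (blast elim: set_plus_elim)
  moreover from this(3) obtain t p where "u = t + p" "t \<in> ideal_gen F" "p \<in> ?P"
    by (rule set_plus_elim)
  moreover from this(3) obtain r where "p = r * g"
    by blast
  ultimately have "v = (w + t) + r * g" "w \<in> W" "t \<in> ideal_gen F"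
    by (simp_all add: add.assoc)
  moreover from this have "w + t \<in> W + ideal_gen F"
    by (intro set_plus_intro)
  ultimately show thesis
    using that by blast
qed

lemma is_ideal_Union_chain:
  assumes "\<C> \<noteq> {}" "subset.chain \<A> \<C>" and ideal: "\<And>X. X \<in> \<C> \<Longrightarrow> is_ideal X"
  shows "is_ideal (\<Union>\<C>)"
proof -
  have "x + y \<in> \<Union>\<C>" if xy: "x \<in> \<Union>\<C>" "y \<in> \<Union>\<C>" for x y
  proof -
    have "finite {x, y}" "{x, y} \<subseteq> \<Union>\<C>"
      using xy by auto
    then obtain X where "X \<in> \<C>" "{x, y} \<subseteq> X"
      using finite_subset_Union_chain assms(1,2) by blast
    then show ?thesis
      using ideal ideal_add by blast
  qed
  moreover have "r * x \<in> \<Union>\<C>" if "x \<in> \<Union>\<C>" for r x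
    using that ideal ideal_mult_left by blast
  moreover have "0 \<in> \<Union>\<C>"
    using assms(1) ideal ideal_zero by blast
  ultimately show ?thesis
    unfolding is_ideal_def by blast
qed

lemma is_ideal_ideal_pow: "is_ideal (ideal_pow M i)"
  by (cases i) (auto simp: is_ideal_UNIV is_ideal_ideal_gen)

lemma ideal_pow_Suc_subset: "ideal_pow M (Suc i) \<subseteq> ideal_pow M i"
proof (induction i)
  case (Suc i)
  then have "{x * y |x y. x \<in> M \<and> y \<in> ideal_pow M (Suc i)} \<subseteq> {x * y |x y. x \<in> M \<and> y \<in> ideal_pow M i}"
    by blast
  then show ?case
    by (simp only: ideal_pow.simps(2)[of M "Suc i"] ideal_pow.simps(2)[of M i] ideal_gen_mono)
qed simp

lemma decseq_ideal_pow: "decseq (ideal_pow M)"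
  by (rule decseq_SucI) (rule ideal_pow_Suc_subset)

lemma ideal_pow_antimono: "j \<le> i \<Longrightarrow> ideal_pow M i \<subseteq> ideal_pow M j"
  using decseqD[OF decseq_ideal_pow] .

lemma mult_mem_ideal_pow_Suc: "x \<in> M \<Longrightarrow> y \<in> ideal_pow M i \<Longrightarrow> x * y \<in> ideal_pow M (Suc i)"
  using ideal_gen_subset by fastforce

section \<open>Local rings\<close>

lemma exists_maximal_ideal:
  assumes J: "is_ideal J" "J \<noteq> UNIV"
  obtains P where "maximal_ideal P" "J \<subseteq> P"
proof -
  let ?A = "{P. is_ideal P \<and> 1 \<notin> P \<and> J \<subseteq> P}"
  have "J \<in> ?A"
    using J ideal_eq_UNIV_if_one by blast
  moreover have "\<Union>\<C> \<in> ?A" if chain: "\<C> \<noteq> {}" "subset.chain ?A \<C>" for \<C>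
  proof -
    have A: "X \<in> ?A" if "X \<in> \<C>" for X
      using chain(2) that unfolding subset.chain_def by blast
    then have "is_ideal (\<Union>\<C>)"
      by (intro is_ideal_Union_chain[OF chain]) blast
    with A chain(1) show ?thesis
      by blast
  qed
  ultimately obtain P where P: "P \<in> ?A" and max: "\<forall>X\<in>?A. P \<subseteq> X \<longrightarrow> X = P"
    using subset_Zorn_nonempty[of ?A] by blast
  have "maximal_ideal P"
    unfolding maximal_ideal_def
  proof (intro conjI allI impI)
    show "is_ideal P" "P \<noteq> UNIV"
      using P by auto
    fix K assume K: "is_ideal K \<and> P \<subseteq> K"
    show "K = P \<or> K = UNIV"
    proof (cases "1 \<in> K")
      case False
      then have "K \<in> ?A"
        using K P by auto
      then show ?thesis
        using max K by blast
    qed (use K ideal_eq_UNIV_if_one in blast)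
  qed
  with P that show thesis
    by blast
qed

lemma local_ring_unit:
  assumes loc: "local_ring_max M" and x: "x \<notin> M"
  obtains y where "y * x = 1"
proof -
  have "{r * x | r. True} = UNIV"
  proof (rule ccontr)
    assume "{r * x | r. True} \<noteq> UNIV"
    then obtain P where P: "maximal_ideal P" "{r * x | r. True} \<subseteq> P"
      by (rule exists_maximal_ideal[OF is_ideal_principal])
    then have "P = M"
      using loc unfolding local_ring_max_def by blast
    moreover have "x \<in> {r * x | r. True}"
      by (rule CollectI, rule exI[of _ 1]) simp
    ultimately show False
      using P(2) x by blast
  qed
  then have "1 \<in> {r * x | r. True}"
    by simp
  then obtain r where "1 = r * x"
    by blast
  then show thesis
    using that by simp
qed

section \<open>Descending chains of ideals above a power of the maximal ideal\<close>

definition stabilises :: "(nat \<Rightarrow> 'b) \<Rightarrow> bool" where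
  "stabilises N \<longleftrightarrow> (\<exists>k. \<forall>j\<ge>k. N j = N k)"

lemma stabilises_antitone_pred:
  assumes "\<And>j j'. j \<le> j' \<Longrightarrow> P j' \<Longrightarrow> P j"
  shows "stabilises (P :: nat \<Rightarrow> bool)"
proof (cases "\<forall>j. P j")
  case False
  then obtain k where "\<not> P k"
    by blast
  then have "\<forall>j\<ge>k. P j = P k"
    using assms by blast
  then show ?thesis
    unfolding stabilises_def by blast
qed (auto simp: stabilises_def)

lemma stabilises_modular:
  assumes N: "decseq N" "\<And>j. is_ideal (N j)" and X: "is_ideal X"
    and sum: "stabilises (\<lambda>j. N j + X)" and Int: "stabilises (\<lambda>j. N j \<inter> X)"
  shows "stabilises N"
proof -
  obtain k1 k2 where k1: "\<And>j. j \<ge> k1 \<Longrightarrow> N j + X = N k1 + X"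
    and k2: "\<And>j. j \<ge> k2 \<Longrightarrow> N j \<inter> X = N k2 \<inter> X"
    using sum Int unfolding stabilises_def by blast
  define k where "k = max k1 k2"
  have "N k \<subseteq> N j" if j: "j \<ge> k" for j
  proof
    fix x assume x: "x \<in> N k"
    have "N k + X = N j + X"
      using k1[of k] k1[of j] j by (simp add: k_def)
    moreover have "x \<in> N k + X"
      using x subset_set_plus_ideal[OF X] by blast
    ultimately obtain n u where nu: "x = n + u" "n \<in> N j" "u \<in> X"
      by (auto elim: set_plus_elim)
    have "N j \<subseteq> N k"
      using decseqD[OF N(1) j] .
    with nu have "x - n \<in> N k"
      using ideal_diff[OF N(2) x] by blast
    with nu have "u \<in> N k \<inter> X"
      by simp
    also have "N k \<inter> X = N j \<inter> X"
      using k2[of k] k2[of j] j by (simp add: k_def)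
    finally show "x \<in> N j"
      using nu ideal_add[OF N(2)] by simp
  qed
  then show ?thesis
    unfolding stabilises_def using decseqD[OF N(1)] by blast
qed

lemma local_ideal_dichotomy:
  assumes loc: "local_ring_max M" and N: "is_ideal N" and V: "is_ideal V"
    and decomp: "\<And>n. n \<in> N \<Longrightarrow> \<exists>v\<in>V. \<exists>r. n = v + r * g"
    and Mg: "\<And>m. m \<in> M \<Longrightarrow> m * g \<in> V"
  shows "g \<in> N + V \<or> N \<subseteq> V"
proof (cases "g \<in> N + V")
  case False
  note g = this
  have "N \<subseteq> V"
  proof
    fix n assume n: "n \<in> N"
    then obtain v r where vr: "v \<in> V" "n = v + r * g"
      using decomp by blast
    show "n \<in> V"
    proof (cases "r \<in> M")
      case True
      then show ?thesis
        using vr ideal_add[OF V] Mg by simp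
    next
      case False
      then obtain u where u: "u * r = 1"
        using local_ring_unit[OF loc] by blast
      have "u * n + - (u * v) \<in> N + V"
        by (intro set_plus_intro ideal_mult_left[OF N n] ideal_uminus[OF V] ideal_mult_left[OF V vr(1)])
      moreover have "u * n + - (u * v) = g"
        using vr(2) u by (simp add: algebra_simps)
      ultimately show ?thesis
        using g by simp
    qed
  qed
  then show ?thesis
    by simp
qed simp

text \<open>\<open>V/V'\<close> is generated by \<open>g\<close> and annihilated by \<open>M\<close>, so it is simple or zero.\<close>

lemma set_plus_eq_if_simple_quotient:
  assumes loc: "local_ring_max M" and V: "is_ideal V" and V': "is_ideal V'" "V' \<subseteq> V"
    and N: "is_ideal N" "N \<subseteq> V"
    and decomp: "\<And>v. v \<in> V \<Longrightarrow> \<exists>v'\<in>V'. \<exists>r. v = v' + r * g"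
    and Mg: "\<And>m. m \<in> M \<Longrightarrow> m * g \<in> V'"
  shows "N + V' = (if g \<in> N + V' then V else V')"
proof (cases "g \<in> N + V'")
  case True
  then obtain n v where nv: "g = n + v" "n \<in> N" "v \<in> V'"
    by (auto elim: set_plus_elim)
  have "V \<subseteq> N + V'"
  proof
    fix u assume "u \<in> V"
    then obtain v' r where "v' \<in> V'" "u = v' + r * g"
      using decomp by blast
    then have "u = r * n + (v' + r * v)"
      using nv(1) by (simp add: algebra_simps)
    moreover have "r * n + (v' + r * v) \<in> N + V'"
      using nv \<open>v' \<in> V'\<close>
      by (intro set_plus_intro ideal_add[OF V'(1)] ideal_mult_left[OF V'(1)] ideal_mult_left[OF N(1)])
    ultimately show "u \<in> N + V'"
      by simp
  qed
  moreover have "N + V' \<subseteq> V"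
    using N(2) V'(2) by (rule set_plus_ideal_least[OF V])
  ultimately show ?thesis
    using True by simp
next
  case False
  have "N \<subseteq> V'"
    using local_ideal_dichotomy[OF loc N(1) V'(1), of g] decomp N(2) Mg False by blast
  then have "N + V' = V'"
    by (rule antisym[OF set_plus_ideal_least[OF V'(1) _ subset_refl] set_zero_plus2[OF ideal_zero[OF N(1)]]])
  then show ?thesis
    using False by simp
qed

lemma stabilises_set_plus_simple_quotient:
  assumes loc: "local_ring_max M" and V: "is_ideal V" and V': "is_ideal V'" "V' \<subseteq> V"
    and decomp: "\<And>v. v \<in> V \<Longrightarrow> \<exists>v'\<in>V'. \<exists>r. v = v' + r * g"
    and Mg: "\<And>m. m \<in> M \<Longrightarrow> m * g \<in> V'"
    and N: "decseq N" "\<And>j. is_ideal (N j)" "\<And>j. N j \<subseteq> V"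
  shows "stabilises (\<lambda>j. N j + V')"
proof -
  have "g \<in> N j + V'" if "j \<le> j'" "g \<in> N j' + V'" for j j'
    using that(2) set_plus_mono2[OF decseqD[OF N(1) that(1)] subset_refl] by blast
  then obtain k where k: "\<forall>j\<ge>k. (g \<in> N j + V') = (g \<in> N k + V')"
    using stabilises_antitone_pred[of "\<lambda>j. g \<in> N j + V'"] unfolding stabilises_def by blast
  have "N j + V' = (if g \<in> N j + V' then V else V')" for j
    using set_plus_eq_if_simple_quotient[OF loc V V' N(2,3) decomp Mg] .
  then have "N j + V' = N k + V'" if "j \<ge> k" for j
    using k that by (smt (verit))
  then show ?thesis
    unfolding stabilises_def by blast
qed

text \<open>The hypotheses say that \<open>V/W\<close> is a vector space over \<open>A/M\<close> spanned by the finite set \<open>F\<close>.\<close>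

lemma stabilises_ideals_between:
  assumes loc: "local_ring_max M" and "finite F"
    and W: "is_ideal W" and V: "is_ideal V" "F \<subseteq> V" "V \<subseteq> W + ideal_gen F"
    and MV: "\<And>m v. m \<in> M \<Longrightarrow> v \<in> V \<Longrightarrow> m * v \<in> W"
    and N: "decseq N" "\<And>j. is_ideal (N j)" "\<And>j. W \<subseteq> N j" "\<And>j. N j \<subseteq> V"
  shows "stabilises N"
  using \<open>finite F\<close> V MV N
proof (induction F arbitrary: V N rule: finite_induct)
  case empty
  then have "N j = W" for j
    using set_plus_ideal_least[OF W subset_refl, of "ideal_gen {}"] ideal_gen_least[OF W, of "{}"]
    by (metis empty_subsetI subset_antisym subset_trans)
  then show ?case
    by (simp add: stabilises_def)
next
  case (insert g F)
  let ?V' = "W + ideal_gen F"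
  have V': "is_ideal ?V'"
    by (rule is_ideal_set_plus[OF W is_ideal_ideal_gen])
  have W_V': "W \<subseteq> ?V'"
    by (rule subset_set_plus_ideal[OF is_ideal_ideal_gen])
  have "?V' \<subseteq> V"
    using insert.prems(2) order_trans[OF insert.prems(7,8)]
    by (intro set_plus_ideal_least[OF insert.prems(1)] ideal_gen_least[OF insert.prems(1)]) auto
  have "stabilises (\<lambda>j. N j \<inter> ?V')"
  proof (rule insert.IH)
    show "F \<subseteq> ?V'" "?V' \<subseteq> W + ideal_gen F"
      using ideal_gen_subset[of F] set_zero_plus2[of W "ideal_gen F"] ideal_zero[OF W] by auto
    show "m * v \<in> W" if "m \<in> M" "v \<in> ?V'" for m v
      using that \<open>?V' \<subseteq> V\<close> insert.prems(4) by blast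
    show "decseq (\<lambda>j. N j \<inter> ?V')"
      using insert.prems(5) by (auto simp: decseq_def)
    show "is_ideal (N j \<inter> ?V')" for j
      by (rule is_ideal_Int[OF insert.prems(6) V'])
    show "W \<subseteq> N j \<inter> ?V'" "N j \<inter> ?V' \<subseteq> ?V'" for j
      using insert.prems(7) W_V' by blast+
  qed (rule V')
  moreover have "stabilises (\<lambda>j. N j + ?V')"
  proof (rule stabilises_set_plus_simple_quotient[OF loc insert.prems(1) V' \<open>?V' \<subseteq> V\<close> _ _ insert.prems(5,6,8)])
    show "\<exists>v'\<in>?V'. \<exists>r. v = v' + r * g" if "v \<in> V" for v
      using ideal_gen_insert_elem[OF _ W] that insert.prems(3) by blast
    show "m * g \<in> ?V'" if "m \<in> M" for m
      using insert.prems(2,4) that W_V' by blast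
  qed
  ultimately show ?case
    using stabilises_modular[OF insert.prems(5,6) V'] by blast
qed

lemma stabilises_ideals_above_pow:
  assumes noeth: "noetherian_ring TYPE('a::comm_ring_1)" and loc: "local_ring_max (M::'a set)"
    and N: "decseq N" "\<And>j. is_ideal (N j)" "\<And>j. ideal_pow M i \<subseteq> N j"
  shows "stabilises N"
  using N
proof (induction i arbitrary: N)
  case 0
  then have "N j = UNIV" for j
    by auto
  then show ?case
    by (simp add: stabilises_def)
next
  case (Suc i)
  let ?X = "ideal_pow M i"
  have "stabilises (\<lambda>j. N j + ?X)"
  proof (rule Suc.IH)
    show "decseq (\<lambda>j. N j + ?X)"
      by (rule decseq_SucI) (rule set_plus_mono2[OF decseq_SucD[OF Suc.prems(1)] subset_refl])
    show "is_ideal (N j + ?X)" for j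
      by (rule is_ideal_set_plus[OF Suc.prems(2) is_ideal_ideal_pow])
    show "?X \<subseteq> N j + ?X" for j
      by (rule set_zero_plus2[OF ideal_zero[OF Suc.prems(2)]])
  qed
  moreover have "stabilises (\<lambda>j. N j \<inter> ?X)"
  proof -
    obtain F where F: "finite F" "?X = ideal_gen F"
      using noeth is_ideal_ideal_pow unfolding noetherian_ring_def by blast
    show ?thesis
    proof (rule stabilises_ideals_between[OF loc F(1) is_ideal_ideal_pow is_ideal_ideal_pow])
      show "F \<subseteq> ?X"
        using F(2) ideal_gen_subset[of F] by simp
      show "?X \<subseteq> ideal_pow M (Suc i) + ideal_gen F"
        unfolding F(2)[symmetric] by (rule set_zero_plus2[OF ideal_zero[OF is_ideal_ideal_pow]])
      show "m * v \<in> ideal_pow M (Suc i)" if "m \<in> M" "v \<in> ?X" for m v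
        using that by (rule mult_mem_ideal_pow_Suc)
      show "decseq (\<lambda>j. N j \<inter> ?X)"
        using Suc.prems(1) by (auto simp: decseq_def)
      show "is_ideal (N j \<inter> ?X)" for j
        by (rule is_ideal_Int[OF Suc.prems(2) is_ideal_ideal_pow])
      show "ideal_pow M (Suc i) \<subseteq> N j \<inter> ?X" for j
        using Suc.prems(3) ideal_pow_Suc_subset by blast
      show "N j \<inter> ?X \<subseteq> ?X" for j
        by blast
    qed
  qed
  ultimately show ?case
    using stabilises_modular[OF Suc.prems(1,2) is_ideal_ideal_pow] by blast
qed

section \<open>Linear compactness\<close>

lemma set_plus_ideal_absorb: "is_ideal J \<Longrightarrow> is_ideal K \<Longrightarrow> K \<subseteq> J \<Longrightarrow> J + K = J"
  by (rule antisym[OF set_plus_ideal_least subset_set_plus_ideal]) auto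

lemma elt_set_plus_ideal_eq:
  assumes J: "is_ideal J" and x: "x \<in> c +o J"
  shows "c +o J = x +o J"
proof -
  have xc: "x - c \<in> J"
    using x by (simp add: set_minus_plus)
  have "y - c \<in> J \<longleftrightarrow> y - x \<in> J" for y
  proof
    assume "y - c \<in> J"
    then have "(y - c) - (x - c) \<in> J"
      by (rule ideal_diff[OF J _ xc])
    then show "y - x \<in> J"
      by simp
  next
    assume "y - x \<in> J"
    then have "(y - x) + (x - c) \<in> J"
      by (rule ideal_add[OF J _ xc])
    then show "y - c \<in> J"
      by simp
  qed
  then show ?thesis
    by (simp add: set_eq_iff set_minus_plus[symmetric])
qed

definition adic_coset :: "'a::comm_ring_1 set \<Rightarrow> nat \<Rightarrow> 'a set \<Rightarrow> bool" where
  "adic_coset M i X \<longleftrightarrow> (\<exists>c J. is_ideal J \<and> ideal_pow M i \<subseteq> J \<and> X = c +o J)"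

lemma adic_coset_UNIV: "adic_coset M 0 UNIV"
  unfolding adic_coset_def by (intro exI[of _ 0] exI[of _ UNIV]) (simp add: is_ideal_UNIV)

lemma adic_coset_set_plus_pow:
  assumes "adic_coset M k X"
  shows "adic_coset M i (X + ideal_pow M i)"
proof -
  obtain c J where J: "is_ideal J" "X = c +o J"
    using assms unfolding adic_coset_def by blast
  then have "X + ideal_pow M i = c +o (J + ideal_pow M i)"
    by (simp add: set_plus_rearrange3)
  then show ?thesis
    unfolding adic_coset_def
    using is_ideal_set_plus[OF J(1) is_ideal_ideal_pow] set_zero_plus2[OF ideal_zero[OF J(1)]]
    by blast
qed

lemma adic_coset_set_plus_pow_eq:
  assumes "adic_coset M i X"
  shows "X + ideal_pow M i = X"
proof -
  obtain c J where J: "is_ideal J" "ideal_pow M i \<subseteq> J" "X = c +o J"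
    using assms unfolding adic_coset_def by blast
  then show ?thesis
    by (simp add: set_plus_rearrange3 set_plus_ideal_absorb[OF J(1) is_ideal_ideal_pow J(2)])
qed

lemma adic_coset_Int:
  assumes X: "adic_coset M i X" and Y: "adic_coset M j Y" and x: "x \<in> X \<inter> Y"
  shows "adic_coset M (max i j) (X \<inter> Y)"
proof -
  obtain c J d K where J: "is_ideal J" "ideal_pow M i \<subseteq> J" "X = c +o J"
    and K: "is_ideal K" "ideal_pow M j \<subseteq> K" "Y = d +o K"
    using X Y unfolding adic_coset_def by blast
  have "X = x +o J" "Y = x +o K"
    using x elt_set_plus_ideal_eq[OF J(1), of x c] elt_set_plus_ideal_eq[OF K(1), of x d] J(3) K(3)
    by simp_all
  then have "X \<inter> Y = x +o (J \<inter> K)"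
    by (simp add: set_eq_iff set_minus_plus[symmetric])
  moreover have "ideal_pow M (max i j) \<subseteq> J \<inter> K"
    using J(2) K(2) ideal_pow_antimono[of i "max i j" M] ideal_pow_antimono[of j "max i j" M] by auto
  ultimately show ?thesis
    unfolding adic_coset_def using is_ideal_Int[OF J(1) K(1)] by blast
qed

lemma adic_coset_finite_Inter:
  assumes "finite \<G>" "\<And>X. X \<in> \<G> \<Longrightarrow> \<exists>i. adic_coset M i X" "\<Inter>\<G> \<noteq> {}"
  shows "\<exists>i. adic_coset M i (\<Inter>\<G>)"
  using assms
proof (induction \<G> rule: finite_induct)
  case (insert X \<G>)
  obtain i where "adic_coset M i (\<Inter>\<G>)"
    using insert by auto
  moreover obtain k where "adic_coset M k X"
    using insert.prems(1) by blast
  moreover obtain x where "x \<in> X \<inter> \<Inter>\<G>"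
    using insert.prems(2) by auto
  ultimately show ?case
    using adic_coset_Int[of M k X i "\<Inter>\<G>"] by auto
qed (use adic_coset_UNIV in auto)

lemma stabilises_Inter:
  assumes "decseq X" "stabilises X"
  shows "\<exists>k. \<forall>j\<ge>k. (\<Inter>n. X n) = X j"
proof -
  obtain k where k: "\<And>j. j \<ge> k \<Longrightarrow> X j = X k"
    using assms(2) unfolding stabilises_def by blast
  have "X k \<subseteq> X n" for n
    using decseqD[OF assms(1), of n k] k[of n] by (cases "n \<le> k") auto
  then have "(\<Inter>n. X n) = X k"
    by blast
  then show ?thesis
    using k by metis
qed

locale complete_noetherian_local =
  fixes M :: "'a::comm_ring_1 set"
  assumes noetherian: "noetherian_ring TYPE('a)"
    and local_ring: "local_ring_max M"
    and complete: "adically_complete M"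
begin

lemma stabilises_adic_cosets:
  assumes Y: "decseq Y" "\<And>j. adic_coset M i (Y j)" "\<And>j. Y j \<noteq> {}"
  shows "stabilises Y"
proof -
  have "\<forall>j. \<exists>c. \<exists>J. is_ideal J \<and> ideal_pow M i \<subseteq> J \<and> Y j = c +o J"
    using Y(2) unfolding adic_coset_def by blast
  then obtain c where "\<forall>j. \<exists>J. is_ideal J \<and> ideal_pow M i \<subseteq> J \<and> Y j = c j +o J"
    by (auto dest: choice)
  from choice[OF this] obtain J where "\<forall>j. is_ideal (J j) \<and> ideal_pow M i \<subseteq> J j \<and> Y j = c j +o J j" ..
  then have J: "\<And>j. is_ideal (J j)" "\<And>j. ideal_pow M i \<subseteq> J j" and Y_eq: "\<And>j. Y j = c j +o J j"
    by auto
  have c: "c j \<in> Y j" for j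
    using Y_eq[of j] ideal_zero[OF J(1)] set_minus_plus[of "c j" "c j" "J j"] by simp
  have Y_eq': "Y j' = c j +o J j'" if "j' \<le> j" for j j'
  proof -
    have "c j \<in> c j' +o J j'"
      using c[of j] decseqD[OF Y(1) that] Y_eq[of j'] by blast
    then show ?thesis
      using Y_eq[of j'] elt_set_plus_ideal_eq[OF J(1)] by simp
  qed
  have "decseq J"
  proof (rule decseq_SucI)
    fix j
    show "J (Suc j) \<subseteq> J j"
      using decseqD[OF Y(1), of j "Suc j"] Y_eq'[of j "Suc j"] Y_eq'[of "Suc j" "Suc j"]
      by (auto simp: set_minus_plus[symmetric])
  qed
  then have "stabilises J"
    by (rule stabilises_ideals_above_pow[OF noetherian local_ring]) (use J in auto)
  then obtain k where k: "\<And>j. j \<ge> k \<Longrightarrow> J j = J k"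
    unfolding stabilises_def by blast
  have "Y j = Y k" if "j \<ge> k" for j
    using Y_eq'[of k j] Y_eq'[of j j] k[OF that] that by simp
  then show ?thesis
    unfolding stabilises_def by blast
qed

lemma adic_sequence_converges:
  assumes steps: "\<And>i. s i - s (Suc i) \<in> ideal_pow M i"
  obtains L where "\<And>i. s i - L \<in> ideal_pow M i"
proof -
  have tele: "s i - s j \<in> ideal_pow M i" if "i \<le> j" for i j
    using that
  proof (induction j rule: dec_induct)
    case (step j)
    have "s j - s (Suc j) \<in> ideal_pow M i"
      using steps[of j] ideal_pow_antimono[OF step(1)] by blast
    with step(3) have "(s i - s j) + (s j - s (Suc j)) \<in> ideal_pow M i"
      by (rule ideal_add[OF is_ideal_ideal_pow])
    then show ?case
      by simp
  qed (simp add: ideal_zero[OF is_ideal_ideal_pow])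
  have "s p - s q \<in> ideal_pow M i" if "p \<ge> i" "q \<ge> i" for i p q
    using ideal_diff[OF is_ideal_ideal_pow tele[OF that(2)] tele[OF that(1)]] by simp
  then have "\<forall>i. \<exists>N. \<forall>p\<ge>N. \<forall>q\<ge>N. s p - s q \<in> ideal_pow M i"
    by blast
  then obtain L where L: "\<forall>i. \<exists>N. \<forall>n\<ge>N. s n - L \<in> ideal_pow M i"
    using complete unfolding adically_complete_def by blast
  have "s i - L \<in> ideal_pow M i" for i
  proof -
    obtain N where N: "\<forall>n\<ge>N. s n - L \<in> ideal_pow M i"
      using L by blast
    have "(s i - s (max N i)) + (s (max N i) - L) \<in> ideal_pow M i"
      using N tele[of i "max N i"] by (intro ideal_add[OF is_ideal_ideal_pow]) simp_all
    then show ?thesis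
      by simp
  qed
  then show thesis
    using that by blast
qed


lemma compatible_adic_cosets_have_common_point:
  assumes V: "\<And>i. adic_coset M i (V i)" "\<And>i. V i \<noteq> {}" "\<And>i. V i \<subseteq> V (Suc i) + ideal_pow M i"
  obtains L where "\<And>i. L \<in> V i"
proof -
  have start: "\<exists>x. x \<in> V 0"
    using V(2) by blast
  have step: "\<exists>y. y \<in> V (Suc n) \<and> x - y \<in> ideal_pow M n" if "x \<in> V n" for x n
  proof -
    have "x \<in> V (Suc n) + ideal_pow M n"
      using that V(3) by blast
    then obtain y m where "x = y + m" "y \<in> V (Suc n)" "m \<in> ideal_pow M n"
      by (rule set_plus_elim)
    then show ?thesis
      by auto
  qed
  obtain s where s: "\<forall>n. s n \<in> V n \<and> s n - s (Suc n) \<in> ideal_pow M n"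
    using dependent_nat_choice[of "\<lambda>n x. x \<in> V n" "\<lambda>n x y. x - y \<in> ideal_pow M n", OF start step]
    by blast
  then obtain L where L: "\<And>i. s i - L \<in> ideal_pow M i"
    using adic_sequence_converges by blast
  have "L \<in> V i" for i
  proof -
    have "s i + - (s i - L) \<in> V i + ideal_pow M i"
      using s L[of i] by (intro set_plus_intro ideal_uminus[OF is_ideal_ideal_pow]) simp_all
    then show ?thesis
      using adic_coset_set_plus_pow_eq[OF V(1)] by simp
  qed
  then show thesis
    using that by blast
qed

lemma nested_adic_cosets_have_common_point:
  assumes U: "decseq U" "\<And>i. adic_coset M i (U i)" "\<And>i. U i \<noteq> {}"
  obtains L where "\<And>i. L \<in> U i"
proof -
  define V where "V i = (\<Inter>j. U j + ideal_pow M i)" for i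
  have V_eq: "\<exists>k. \<forall>j\<ge>k. V i = U j + ideal_pow M i" for i
  proof -
    have "decseq (\<lambda>j. U j + ideal_pow M i)"
      using U(1) unfolding decseq_def by (simp add: set_plus_mono2)
    moreover have "stabilises (\<lambda>j. U j + ideal_pow M i)"
    proof (rule stabilises_adic_cosets[OF calculation])
      show "adic_coset M i (U j + ideal_pow M i)" for j
        by (rule adic_coset_set_plus_pow[OF U(2)])
      show "U j + ideal_pow M i \<noteq> {}" for j
        using U(3)[of j] subset_set_plus_ideal[OF is_ideal_ideal_pow, of "U j" M i] by blast
    qed
    ultimately show ?thesis
      unfolding V_def by (rule stabilises_Inter)
  qed
  obtain L where "\<And>i. L \<in> V i"
  proof (rule compatible_adic_cosets_have_common_point)
    fix i
    obtain k1 k2 where k1: "\<forall>j\<ge>k1. V i = U j + ideal_pow M i"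
      and k2: "\<forall>j\<ge>k2. V (Suc i) = U j + ideal_pow M (Suc i)"
      using V_eq by blast
    define j where "j = max k1 k2"
    have Vi: "V i = U j + ideal_pow M i"
      using k1 by (simp add: j_def)
    then show "adic_coset M i (V i)"
      using adic_coset_set_plus_pow[OF U(2)] by simp
    show "V i \<noteq> {}"
      using Vi U(3)[of j] subset_set_plus_ideal[OF is_ideal_ideal_pow, of "U j" M i] by blast
    have "V (Suc i) = U j + ideal_pow M (Suc i)"
      using k2 by (simp add: j_def del: ideal_pow.simps)
    then have "V (Suc i) + ideal_pow M i = U j + (ideal_pow M (Suc i) + ideal_pow M i)"
      by (simp only: add.assoc)
    also have "ideal_pow M (Suc i) + ideal_pow M i = ideal_pow M i"
      using set_plus_ideal_absorb[OF is_ideal_ideal_pow is_ideal_ideal_pow ideal_pow_Suc_subset]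
      by (simp add: add.commute)
    finally show "V i \<subseteq> V (Suc i) + ideal_pow M i"
      using Vi by simp
  qed blast
  moreover have "V i \<subseteq> U i" for i
    using adic_coset_set_plus_pow_eq[OF U(2), of i] unfolding V_def by blast
  ultimately show thesis
    using that by blast
qed

lemma exists_minimal_adic_coset:
  assumes "X \<in> \<Q>" and cosets: "\<And>Y. Y \<in> \<Q> \<Longrightarrow> adic_coset M i Y \<and> Y \<noteq> {}"
  shows "\<exists>Y\<in>\<Q>. \<forall>Z\<in>\<Q>. Z \<subseteq> Y \<longrightarrow> Z = Y"
proof -
  let ?R = "{(Z, Y). Z \<subset> Y \<and> Z \<in> \<Q> \<and> Y \<in> \<Q>}"
  have "wf ?R"
  proof (rule ccontr)
    assume "\<not> wf ?R"
    then obtain f where "\<forall>j. (f (Suc j), f j) \<in> ?R"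
      unfolding wf_iff_no_infinite_down_chain by blast
    then have f: "f (Suc j) \<subset> f j" "f j \<in> \<Q>" for j
      by auto
    have "decseq f"
      using f(1) by (intro decseq_SucI) auto
    then have "stabilises f"
      by (rule stabilises_adic_cosets[of f i]) (simp_all add: cosets f(2))
    then obtain k where k: "\<forall>j\<ge>k. f j = f k"
      unfolding stabilises_def by blast
    have "f (Suc k) = f k"
      using spec[OF k, of "Suc k"] by simp
    with f(1)[of k] show False
      by simp
  qed
  obtain Y where Y: "Y \<in> \<Q>" "\<And>Z. (Z, Y) \<in> ?R \<Longrightarrow> Z \<notin> \<Q>"
    by (rule wfE_min[OF \<open>wf ?R\<close> assms(1)]) blast
  have "Z = Y" if "Z \<in> \<Q>" "Z \<subseteq> Y" for Z
  proof (rule ccontr)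
    assume "Z \<noteq> Y"
    with that Y(1) have "(Z, Y) \<in> ?R"
      by auto
    with Y(2) that(1) show False
      by blast
  qed
  with Y(1) show ?thesis
    by blast
qed

lemma least_adic_approximation:
  assumes "X1 \<in> \<F>" and Int: "\<And>X Y. X \<in> \<F> \<Longrightarrow> Y \<in> \<F> \<Longrightarrow> X \<inter> Y \<in> \<F>"
    and cosets: "\<And>X. X \<in> \<F> \<Longrightarrow> X \<noteq> {} \<and> (\<exists>k. adic_coset M k X)"
  shows "\<exists>X0\<in>\<F>. \<forall>X\<in>\<F>. X0 + ideal_pow M i \<subseteq> X + ideal_pow M i"
proof -
  let ?Q = "{X + ideal_pow M i | X. X \<in> \<F>}"
  have Q_cosets: "adic_coset M i Y \<and> Y \<noteq> {}" if Y: "Y \<in> ?Q" for Y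
  proof -
    obtain X where X: "X \<in> \<F>" "Y = X + ideal_pow M i"
      using Y by blast
    obtain k where "adic_coset M k X" "X \<noteq> {}"
      using cosets[OF X(1)] by blast
    then show ?thesis
      using adic_coset_set_plus_pow[of M k X i] subset_set_plus_ideal[OF is_ideal_ideal_pow, of X M i] X(2)
      by auto
  qed
  have "X1 + ideal_pow M i \<in> ?Q"
    using assms(1) by (intro CollectI exI[of _ X1] conjI refl)
  then have "\<exists>Y\<in>?Q. \<forall>Z\<in>?Q. Z \<subseteq> Y \<longrightarrow> Z = Y"
    by (rule exists_minimal_adic_coset[OF _ Q_cosets])
  then obtain Y where Y: "Y \<in> ?Q" "\<forall>Z\<in>?Q. Z \<subseteq> Y \<longrightarrow> Z = Y" ..
  obtain X0 where X0: "X0 \<in> \<F>" "Y = X0 + ideal_pow M i"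
    using Y(1) by blast
  \<comment> \<open>a minimal element is least, because \<open>\<F>\<close> is closed under intersection\<close>
  have "X0 + ideal_pow M i \<subseteq> X + ideal_pow M i" if X: "X \<in> \<F>" for X
  proof -
    have "(X0 \<inter> X) + ideal_pow M i \<in> ?Q"
      using Int[OF X0(1) X] by (intro CollectI exI[of _ "X0 \<inter> X"] conjI refl)
    moreover have "(X0 \<inter> X) + ideal_pow M i \<subseteq> Y"
      unfolding X0(2) by (rule set_plus_mono2[OF Int_lower1 subset_refl])
    ultimately have "(X0 \<inter> X) + ideal_pow M i = Y"
      using Y(2) by blast
    moreover have "(X0 \<inter> X) + ideal_pow M i \<subseteq> X + ideal_pow M i"
      by (rule set_plus_mono2) auto
    ultimately show ?thesis
      using X0(2) by simp
  qed
  then show ?thesis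
    using X0(1) by blast
qed

lemma Inter_Int_closed_adic_cosets_nonempty:
  assumes "UNIV \<in> \<F>" and Int: "\<And>X Y. X \<in> \<F> \<Longrightarrow> Y \<in> \<F> \<Longrightarrow> X \<inter> Y \<in> \<F>"
    and cosets: "\<And>X. X \<in> \<F> \<Longrightarrow> X \<noteq> {} \<and> (\<exists>k. adic_coset M k X)"
  shows "\<Inter>\<F> \<noteq> {}"
proof -
  have "\<forall>i. \<exists>X0. X0 \<in> \<F> \<and> (\<forall>X\<in>\<F>. X0 + ideal_pow M i \<subseteq> X + ideal_pow M i)"
    using least_adic_approximation[OF assms] by blast
  from choice[OF this] obtain X0
    where "\<forall>i. X0 i \<in> \<F> \<and> (\<forall>X\<in>\<F>. X0 i + ideal_pow M i \<subseteq> X + ideal_pow M i)" ..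
  then have X0: "\<And>i. X0 i \<in> \<F>" "\<And>i X. X \<in> \<F> \<Longrightarrow> X0 i + ideal_pow M i \<subseteq> X + ideal_pow M i"
    by blast+
  obtain L where L: "\<And>i. L \<in> X0 i + ideal_pow M i"
  proof (rule nested_adic_cosets_have_common_point)
    show "decseq (\<lambda>i. X0 i + ideal_pow M i)"
    proof (rule decseq_SucI)
      fix i
      have "X0 (Suc i) + ideal_pow M (Suc i) \<subseteq> X0 i + ideal_pow M (Suc i)"
        using X0 by blast
      also have "\<dots> \<subseteq> X0 i + ideal_pow M i"
        by (rule set_plus_mono2[OF subset_refl ideal_pow_Suc_subset])
      finally show "X0 (Suc i) + ideal_pow M (Suc i) \<subseteq> X0 i + ideal_pow M i" .
    qed
    show "adic_coset M i (X0 i + ideal_pow M i)" for i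
      using cosets[OF X0(1)] adic_coset_set_plus_pow by blast
    show "X0 i + ideal_pow M i \<noteq> {}" for i
      using cosets[OF X0(1)] subset_set_plus_ideal[OF is_ideal_ideal_pow, of "X0 i" M i] by blast
  qed blast
  have "L \<in> X" if X: "X \<in> \<F>" for X
  proof -
    obtain k where k: "adic_coset M k X"
      using cosets X by blast
    have "L \<in> X + ideal_pow M k"
      using L[of k] X0(2)[OF X] by blast
    then show ?thesis
      using adic_coset_set_plus_pow_eq[OF k] by simp
  qed
  then show ?thesis
    by blast
qed

theorem Inter_adic_cosets_nonempty:
  assumes cosets: "\<And>X. X \<in> \<F> \<Longrightarrow> \<exists>i. adic_coset M i X"
    and fip: "\<And>\<G>. \<G> \<subseteq> \<F> \<Longrightarrow> finite \<G> \<Longrightarrow> \<Inter>\<G> \<noteq> {}"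
  shows "\<Inter>\<F> \<noteq> {}"
proof -
  define \<F>' where "\<F>' = {\<Inter>\<G> | \<G>. \<G> \<subseteq> \<F> \<and> finite \<G>}"
  have "\<Inter>\<F>' \<noteq> {}"
  proof (rule Inter_Int_closed_adic_cosets_nonempty)
    show "UNIV \<in> \<F>'"
      unfolding \<F>'_def by (intro CollectI exI[of _ "{}"]) auto
    show "X \<inter> Y \<in> \<F>'" if XY: "X \<in> \<F>'" "Y \<in> \<F>'" for X Y
    proof -
      obtain \<G> \<H> where "X = \<Inter>\<G>" "\<G> \<subseteq> \<F>" "finite \<G>" "Y = \<Inter>\<H>" "\<H> \<subseteq> \<F>" "finite \<H>"
        using XY unfolding \<F>'_def by blast
      then have "X \<inter> Y = \<Inter>(\<G> \<union> \<H>)" "\<G> \<union> \<H> \<subseteq> \<F>" "finite (\<G> \<union> \<H>)"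
        by auto
      then show ?thesis
        unfolding \<F>'_def by blast
    qed
    show "X \<noteq> {} \<and> (\<exists>i. adic_coset M i X)" if X: "X \<in> \<F>'" for X
    proof -
      obtain \<G> where G: "X = \<Inter>\<G>" "\<G> \<subseteq> \<F>" "finite \<G>"
        using X unfolding \<F>'_def by blast
      have "\<exists>i. adic_coset M i (\<Inter>\<G>)"
        by (rule adic_coset_finite_Inter[OF G(3)]) (use G(2) cosets fip[OF G(2,3)] in auto)
      then show ?thesis
        using fip[OF G(2,3)] G(1) by simp
    qed
  qed
  moreover have "X \<in> \<F>'" if "X \<in> \<F>" for X
    using that unfolding \<F>'_def by (intro CollectI exI[of _ "{X}"]) auto
  ultimately show ?thesis
    by blast
qed

end

section \<open>Approximable partial homomorphisms\<close>

definition lincomb :: "('b \<Rightarrow> 'a::comm_ring_1) set \<Rightarrow> (('b \<Rightarrow> 'a) \<Rightarrow> 'a) \<Rightarrow> 'b \<Rightarrow> 'a" where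
  "lincomb S \<beta> = (\<lambda>n. \<Sum>y\<in>S. \<beta> y * y n)"

definition partial_hom :: "(('b \<Rightarrow> 'a::comm_ring_1) \<times> 'a) set \<Rightarrow> bool" where
  "partial_hom G \<longleftrightarrow> single_valued G \<and> ((\<lambda>_. 0), 0) \<in> G \<and>
     (\<forall>z a z' a'. (z, a) \<in> G \<longrightarrow> (z', a') \<in> G \<longrightarrow> ((\<lambda>n. z n + z' n), a + a') \<in> G) \<and>
     (\<forall>r z a. (z, a) \<in> G \<longrightarrow> ((\<lambda>n. r * z n), r * a) \<in> G)"

definition approximable :: "'a::comm_ring_1 set \<Rightarrow> (('b \<Rightarrow> 'a) \<times> 'a) set \<Rightarrow> bool" where
  "approximable M G \<longleftrightarrow> (\<forall>S E i. finite S \<longrightarrow> finite E \<longrightarrow> (\<forall>\<beta>\<in>E. lincomb S \<beta> \<in> Domain G) \<longrightarrow>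
     (\<exists>w. \<forall>\<beta>\<in>E. \<forall>a. (lincomb S \<beta>, a) \<in> G \<longrightarrow> a - (\<Sum>y\<in>S. \<beta> y * w y) \<in> ideal_pow M i))"

lemma partial_hom_add: "partial_hom G \<Longrightarrow> (z, a) \<in> G \<Longrightarrow> (z', a') \<in> G \<Longrightarrow> ((\<lambda>n. z n + z' n), a + a') \<in> G"
  by (simp add: partial_hom_def)

lemma partial_hom_scale: "partial_hom G \<Longrightarrow> (z, a) \<in> G \<Longrightarrow> ((\<lambda>n. r * z n), r * a) \<in> G"
  by (simp add: partial_hom_def)

lemma partial_hom_unique: "partial_hom G \<Longrightarrow> (z, a) \<in> G \<Longrightarrow> (z, b) \<in> G \<Longrightarrow> a = b"
  unfolding partial_hom_def by (blast dest: single_valuedD)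

lemma approximableD:
  assumes "approximable M G" "finite S" "finite E" "\<And>\<beta>. \<beta> \<in> E \<Longrightarrow> lincomb S \<beta> \<in> Domain G"
  shows "\<exists>w. \<forall>\<beta>\<in>E. \<forall>a. (lincomb S \<beta>, a) \<in> G \<longrightarrow> a - (\<Sum>y\<in>S. \<beta> y * w y) \<in> ideal_pow M i"
  using assms unfolding approximable_def by blast

lemma partial_hom_Union_chain:
  assumes "\<C> \<noteq> {}" "subset.chain \<A> \<C>" "\<And>G. G \<in> \<C> \<Longrightarrow> partial_hom G"
  shows "partial_hom (\<Union>\<C>)"
proof -
  have two: "\<exists>G\<in>\<C>. p \<in> G \<and> q \<in> G" if "p \<in> \<Union>\<C>" "q \<in> \<Union>\<C>" for p q
  proof -
    have "finite {p, q}" "{p, q} \<subseteq> \<Union>\<C>"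
      using that by auto
    then obtain G where "G \<in> \<C>" "{p, q} \<subseteq> G"
      using finite_subset_Union_chain assms(1,2) by blast
    then show ?thesis
      by blast
  qed
  have "single_valued (\<Union>\<C>)"
  proof (rule single_valuedI)
    fix z a b assume "(z, a) \<in> \<Union>\<C>" "(z, b) \<in> \<Union>\<C>"
    then obtain G where "G \<in> \<C>" "(z, a) \<in> G" "(z, b) \<in> G"
      using two by blast
    then show "a = b"
      using partial_hom_unique assms(3) by blast
  qed
  moreover have "((\<lambda>_. 0), 0) \<in> \<Union>\<C>"
    using assms(1,3) unfolding partial_hom_def by blast
  moreover have "((\<lambda>n. z n + z' n), a + a') \<in> \<Union>\<C>" if za: "(z, a) \<in> \<Union>\<C>" "(z', a') \<in> \<Union>\<C>" for z a z' a'
  proof -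
    obtain G where "G \<in> \<C>" "(z, a) \<in> G" "(z', a') \<in> G"
      using two[OF za] by blast
    then show ?thesis
      using partial_hom_add assms(3) by blast
  qed
  moreover have "((\<lambda>n. r * z n), r * a) \<in> \<Union>\<C>" if "(z, a) \<in> \<Union>\<C>" for r z a
    using that partial_hom_scale assms(3) by blast
  ultimately show ?thesis
    unfolding partial_hom_def by blast
qed

lemma approximable_Union_chain:
  assumes "\<C> \<noteq> {}" "subset.chain \<A> \<C>" "\<And>G. G \<in> \<C> \<Longrightarrow> partial_hom G \<and> approximable M G"
  shows "approximable M (\<Union>\<C>)"
  unfolding approximable_def
proof (intro allI impI)
  fix S E i assume S: "finite S" and E: "finite E" and dom: "\<forall>\<beta>\<in>E. lincomb S \<beta> \<in> Domain (\<Union>\<C>)"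
  then have "\<forall>\<beta>\<in>E. \<exists>a. (lincomb S \<beta>, a) \<in> \<Union>\<C>"
    by blast
  then obtain f where f: "\<forall>\<beta>\<in>E. (lincomb S \<beta>, f \<beta>) \<in> \<Union>\<C>"
    by (auto dest: bchoice)
  have "finite ((\<lambda>\<beta>. (lincomb S \<beta>, f \<beta>)) ` E)" "(\<lambda>\<beta>. (lincomb S \<beta>, f \<beta>)) ` E \<subseteq> \<Union>\<C>"
    using E f by auto
  then obtain G where G: "G \<in> \<C>" "(\<lambda>\<beta>. (lincomb S \<beta>, f \<beta>)) ` E \<subseteq> G"
    using finite_subset_Union_chain assms(1,2) by blast
  moreover have "approximable M G"
    using G(1) assms(3) by blast
  ultimately obtain w where w: "\<forall>\<beta>\<in>E. \<forall>a. (lincomb S \<beta>, a) \<in> G \<longrightarrow> a - (\<Sum>y\<in>S. \<beta> y * w y) \<in> ideal_pow M i"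
    using approximableD[OF _ S E, of M G i] by blast
  have "partial_hom (\<Union>\<C>)"
    using partial_hom_Union_chain assms by blast
  then have "a - (\<Sum>y\<in>S. \<beta> y * w y) \<in> ideal_pow M i" if "\<beta> \<in> E" "(lincomb S \<beta>, a) \<in> \<Union>\<C>" for \<beta> a
    using that f G(2) w partial_hom_unique[of "\<Union>\<C>"] by blast
  then show "\<exists>w. \<forall>\<beta>\<in>E. \<forall>a. (lincomb S \<beta>, a) \<in> \<Union>\<C> \<longrightarrow> a - (\<Sum>y\<in>S. \<beta> y * w y) \<in> ideal_pow M i"
    by blast
qed

lemma sum_restricted_coeffs:
  fixes \<gamma> f :: "'b \<Rightarrow> 'a::comm_ring_1"
  assumes "finite S" "S' \<subseteq> S"
  shows "(\<Sum>y\<in>S. (if y \<in> S' then \<gamma> y else 0) * f y) = (\<Sum>y\<in>S'. \<gamma> y * f y)"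
proof -
  have "(\<Sum>y\<in>S. (if y \<in> S' then \<gamma> y else 0) * f y) = (\<Sum>y\<in>S. if y \<in> S' then \<gamma> y * f y else 0)"
    by (rule sum.cong) auto
  also have "\<dots> = (\<Sum>y\<in>S \<inter> S'. \<gamma> y * f y)"
    using assms(1) by (simp add: sum.inter_restrict)
  finally show ?thesis
    using assms(2) by (simp add: Int_absorb1)
qed

lemma sum_shifted_coeffs:
  fixes \<beta> f :: "'b \<Rightarrow> 'a::comm_ring_1"
  assumes "finite S"
  shows "(\<Sum>y\<in>insert x S. ((if y \<in> S then \<beta> y else 0) - (if y = x then c else 0)) * f y)
    = (\<Sum>y\<in>S. \<beta> y * f y) - c * f x"
proof -
  have "(\<Sum>y\<in>insert x S. (if y = x then c else 0) * f y) = (\<Sum>y\<in>insert x S. if y = x then c * f x else 0)"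
    by (rule sum.cong) auto
  also have "\<dots> = c * f x"
    using assms by simp
  moreover have "(\<Sum>y\<in>insert x S. (if y \<in> S then \<beta> y else 0) * f y) = (\<Sum>y\<in>S. \<beta> y * f y)"
    by (rule sum_restricted_coeffs) (use assms in auto)
  ultimately show ?thesis
    by (simp add: left_diff_distrib sum_subtractf)
qed

definition finite_system :: "(('b \<Rightarrow> 'a::comm_ring_1) \<times> 'a) set \<Rightarrow> ('b \<Rightarrow> 'a) set \<Rightarrow> (('b \<Rightarrow> 'a) \<Rightarrow> 'a) set \<Rightarrow> bool" where
  "finite_system G S \<Gamma> \<longleftrightarrow> finite S \<and> finite \<Gamma> \<and> (\<forall>\<gamma>\<in>\<Gamma>. lincomb S \<gamma> \<in> Domain G)"

definition approx_values ::
    "'a::comm_ring_1 set \<Rightarrow> (('b \<Rightarrow> 'a) \<times> 'a) set \<Rightarrow> ('b \<Rightarrow> 'a) \<Rightarrow> ('b \<Rightarrow> 'a) set \<Rightarrow> (('b \<Rightarrow> 'a) \<Rightarrow> 'a) set \<Rightarrow> nat \<Rightarrow> 'a set" where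
  "approx_values M G x S \<Gamma> i =
     {w x | w. \<forall>\<gamma>\<in>\<Gamma>. \<forall>a. (lincomb S \<gamma>, a) \<in> G \<longrightarrow> a - (\<Sum>y\<in>S. \<gamma> y * w y) \<in> ideal_pow M i}"

lemma is_ideal_solution_values:
  assumes I: "is_ideal I"
  shows "is_ideal {w x | w. \<forall>\<gamma>\<in>\<Gamma>. (\<Sum>y\<in>S. \<gamma> y * w y) \<in> I}"
  unfolding is_ideal_def
proof (intro conjI ballI allI)
  show "0 \<in> {w x | w. \<forall>\<gamma>\<in>\<Gamma>. (\<Sum>y\<in>S. \<gamma> y * w y) \<in> I}"
    using ideal_zero[OF I] by (intro CollectI exI[of _ "\<lambda>_. 0"]) simp
next
  fix u u' assume "u \<in> {w x | w. \<forall>\<gamma>\<in>\<Gamma>. (\<Sum>y\<in>S. \<gamma> y * w y) \<in> I}" "u' \<in> {w x | w. \<forall>\<gamma>\<in>\<Gamma>. (\<Sum>y\<in>S. \<gamma> y * w y) \<in> I}"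
  then obtain w w' where w: "u = w x" "\<forall>\<gamma>\<in>\<Gamma>. (\<Sum>y\<in>S. \<gamma> y * w y) \<in> I"
    and w': "u' = w' x" "\<forall>\<gamma>\<in>\<Gamma>. (\<Sum>y\<in>S. \<gamma> y * w' y) \<in> I"
    by blast
  have "(\<Sum>y\<in>S. \<gamma> y * (w y + w' y)) \<in> I" if "\<gamma> \<in> \<Gamma>" for \<gamma>
    using ideal_add[OF I] w(2) w'(2) that by (simp add: distrib_left sum.distrib)
  then show "u + u' \<in> {w x | w. \<forall>\<gamma>\<in>\<Gamma>. (\<Sum>y\<in>S. \<gamma> y * w y) \<in> I}"
    using w(1) w'(1) by (intro CollectI exI[of _ "\<lambda>y. w y + w' y"]) simp
next
  fix r u assume "u \<in> {w x | w. \<forall>\<gamma>\<in>\<Gamma>. (\<Sum>y\<in>S. \<gamma> y * w y) \<in> I}"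
  then obtain w where w: "u = w x" "\<forall>\<gamma>\<in>\<Gamma>. (\<Sum>y\<in>S. \<gamma> y * w y) \<in> I"
    by blast
  have "(\<Sum>y\<in>S. \<gamma> y * (r * w y)) = r * (\<Sum>y\<in>S. \<gamma> y * w y)" for \<gamma>
    by (simp add: sum_distrib_left mult.left_commute)
  then have "(\<Sum>y\<in>S. \<gamma> y * (r * w y)) \<in> I" if "\<gamma> \<in> \<Gamma>" for \<gamma>
    using ideal_mult_left[OF I] w(2) that by simp
  then show "r * u \<in> {w x | w. \<forall>\<gamma>\<in>\<Gamma>. (\<Sum>y\<in>S. \<gamma> y * w y) \<in> I}"
    using w(1) by (intro CollectI exI[of _ "\<lambda>y. r * w y"]) simp
qed

lemma subset_solution_values:
  assumes I: "is_ideal I" and S: "finite S" "x \<in> S"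
  shows "I \<subseteq> {w x | w. \<forall>\<gamma>\<in>\<Gamma>. (\<Sum>y\<in>S. \<gamma> y * w y) \<in> I}"
proof
  fix u assume u: "u \<in> I"
  have "(\<Sum>y\<in>S. \<gamma> y * (if y = x then u else 0)) = \<gamma> x * u" for \<gamma>
  proof -
    have "(\<Sum>y\<in>S. \<gamma> y * (if y = x then u else 0)) = (\<Sum>y\<in>S. if y = x then \<gamma> x * u else 0)"
      by (rule sum.cong) auto
    then show ?thesis
      using S by simp
  qed
  then show "u \<in> {w x | w. \<forall>\<gamma>\<in>\<Gamma>. (\<Sum>y\<in>S. \<gamma> y * w y) \<in> I}"
    using ideal_mult_left[OF I u] by (intro CollectI exI[of _ "\<lambda>y. if y = x then u else 0"]) simp
qed

lemma approx_values_eq_elt_set_plus: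
  assumes dom: "\<And>\<gamma>. \<gamma> \<in> \<Gamma> \<Longrightarrow> lincomb S \<gamma> \<in> Domain G"
    and w1: "\<And>\<gamma> a. \<gamma> \<in> \<Gamma> \<Longrightarrow> (lincomb S \<gamma>, a) \<in> G \<Longrightarrow> a - (\<Sum>y\<in>S. \<gamma> y * w1 y) \<in> ideal_pow M i"
  shows "approx_values M G x S \<Gamma> i = w1 x +o {w x | w. \<forall>\<gamma>\<in>\<Gamma>. (\<Sum>y\<in>S. \<gamma> y * w y) \<in> ideal_pow M i}"
proof -
  define J where "J = {w x | w. \<forall>\<gamma>\<in>\<Gamma>. (\<Sum>y\<in>S. \<gamma> y * w y) \<in> ideal_pow M i}"
  have shift: "a - (\<Sum>y\<in>S. \<gamma> y * w y) = (a - (\<Sum>y\<in>S. \<gamma> y * w1 y)) - (\<Sum>y\<in>S. \<gamma> y * (w y - w1 y))"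
    for a \<gamma> w
    by (simp add: right_diff_distrib sum_subtractf)
  have "v \<in> approx_values M G x S \<Gamma> i \<longleftrightarrow> v - w1 x \<in> J" for v
  proof
    assume "v \<in> approx_values M G x S \<Gamma> i"
    then obtain w where w: "v = w x" "\<And>\<gamma> a. \<gamma> \<in> \<Gamma> \<Longrightarrow> (lincomb S \<gamma>, a) \<in> G \<Longrightarrow> a - (\<Sum>y\<in>S. \<gamma> y * w y) \<in> ideal_pow M i"
      unfolding approx_values_def by blast
    have "(\<Sum>y\<in>S. \<gamma> y * (w y - w1 y)) \<in> ideal_pow M i" if \<gamma>: "\<gamma> \<in> \<Gamma>" for \<gamma>
    proof -
      obtain a where a: "(lincomb S \<gamma>, a) \<in> G"
        using dom[OF \<gamma>] by blast
      show ?thesis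
        using ideal_diff[OF is_ideal_ideal_pow w1[OF \<gamma> a] w(2)[OF \<gamma> a]] shift[of a \<gamma> w] by simp
    qed
    then show "v - w1 x \<in> J"
      unfolding J_def using w(1) by (intro CollectI exI[of _ "\<lambda>y. w y - w1 y"]) simp
  next
    assume "v - w1 x \<in> J"
    then obtain w0 where w0: "v - w1 x = w0 x" "\<And>\<gamma>. \<gamma> \<in> \<Gamma> \<Longrightarrow> (\<Sum>y\<in>S. \<gamma> y * w0 y) \<in> ideal_pow M i"
      unfolding J_def by blast
    have approx: "a - (\<Sum>y\<in>S. \<gamma> y * (w1 y + w0 y)) \<in> ideal_pow M i"
      if "\<gamma> \<in> \<Gamma>" "(lincomb S \<gamma>, a) \<in> G" for \<gamma> a
    proof -
      have "a - (\<Sum>y\<in>S. \<gamma> y * (w1 y + w0 y)) = (a - (\<Sum>y\<in>S. \<gamma> y * w1 y)) - (\<Sum>y\<in>S. \<gamma> y * w0 y)"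
        by (simp add: distrib_left sum.distrib)
      then show ?thesis
        using ideal_diff[OF is_ideal_ideal_pow w1[OF that] w0(2)[OF that(1)]] by (simp only:)
    qed
    have "v = w1 x + w0 x"
      using w0(1) by (metis diff_add_cancel add.commute)
    then show "v \<in> approx_values M G x S \<Gamma> i"
      unfolding approx_values_def
      by (intro CollectI exI[of _ "\<lambda>y. w1 y + w0 y"] conjI) (simp_all add: approx)
  qed
  then show ?thesis
    unfolding J_def[symmetric] by (simp add: set_eq_iff set_minus_plus[symmetric])
qed

lemma adic_coset_approx_values:
  assumes G: "approximable M G" and sys: "finite_system G S \<Gamma>" and x: "x \<in> S"
  shows "adic_coset M i (approx_values M G x S \<Gamma> i)"
proof -
  have S: "finite S" "finite \<Gamma>" "\<And>\<gamma>. \<gamma> \<in> \<Gamma> \<Longrightarrow> lincomb S \<gamma> \<in> Domain G"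
    using sys unfolding finite_system_def by auto
  obtain w1 where "\<forall>\<gamma>\<in>\<Gamma>. \<forall>a. (lincomb S \<gamma>, a) \<in> G \<longrightarrow> a - (\<Sum>y\<in>S. \<gamma> y * w1 y) \<in> ideal_pow M i"
    using approximableD[OF G S, of i] by blast
  then have "\<And>\<gamma> a. \<gamma> \<in> \<Gamma> \<Longrightarrow> (lincomb S \<gamma>, a) \<in> G \<Longrightarrow> a - (\<Sum>y\<in>S. \<gamma> y * w1 y) \<in> ideal_pow M i"
    by blast
  then have "approx_values M G x S \<Gamma> i = w1 x +o {w x | w. \<forall>\<gamma>\<in>\<Gamma>. (\<Sum>y\<in>S. \<gamma> y * w y) \<in> ideal_pow M i}"
    using approx_values_eq_elt_set_plus[OF S(3)] by blast
  moreover have "is_ideal {w x | w. \<forall>\<gamma>\<in>\<Gamma>. (\<Sum>y\<in>S. \<gamma> y * w y) \<in> ideal_pow M i}"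
    by (rule is_ideal_solution_values[OF is_ideal_ideal_pow])
  moreover have "ideal_pow M i \<subseteq> {w x | w. \<forall>\<gamma>\<in>\<Gamma>. (\<Sum>y\<in>S. \<gamma> y * w y) \<in> ideal_pow M i}"
    by (rule subset_solution_values[OF is_ideal_ideal_pow S(1) x])
  ultimately show ?thesis
    unfolding adic_coset_def by blast
qed

lemma lincomb_restricted_coeffs:
  "finite S \<Longrightarrow> S' \<subseteq> S \<Longrightarrow> lincomb S (\<lambda>y. if y \<in> S' then \<gamma> y else 0) = lincomb S' \<gamma>"
  unfolding lincomb_def by (simp add: sum_restricted_coeffs)

lemma approx_values_finite_Inter:
  assumes G: "approximable M G" and T: "finite T" "\<And>S \<Gamma> i. (S, \<Gamma>, i) \<in> T \<Longrightarrow> finite_system G S \<Gamma>"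
  shows "\<exists>v. \<forall>(S, \<Gamma>, i)\<in>T. v \<in> approx_values M G x S \<Gamma> i"
proof -
  let ?restrict = "\<lambda>S \<gamma> y. if y \<in> S then \<gamma> y else 0"
  define S0 where "S0 = insert x (\<Union>(S, \<Gamma>, i)\<in>T. S)"
  define \<Gamma>0 where "\<Gamma>0 = (\<Union>(S, \<Gamma>, i)\<in>T. ?restrict S ` \<Gamma>)"
  define i0 where "i0 = (\<Sum>(S, \<Gamma>, i)\<in>T. i)"
  have sys: "finite S" "finite \<Gamma>" "\<And>\<gamma>. \<gamma> \<in> \<Gamma> \<Longrightarrow> lincomb S \<gamma> \<in> Domain G" if "(S, \<Gamma>, i) \<in> T" for S \<Gamma> i
    using T(2)[OF that] unfolding finite_system_def by auto
  have sub: "S \<subseteq> S0" if "(S, \<Gamma>, i) \<in> T" for S \<Gamma> i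
    using that unfolding S0_def by blast
  have "finite S0"
    unfolding S0_def using T(1) sys(1) by auto
  have restrict: "lincomb S0 (?restrict S \<gamma>) = lincomb S \<gamma>" if "(S, \<Gamma>, i) \<in> T" for S \<Gamma> i \<gamma>
    by (rule lincomb_restricted_coeffs[OF \<open>finite S0\<close> sub[OF that]])
  have "finite \<Gamma>0"
    unfolding \<Gamma>0_def using T(1) sys(2) by auto
  moreover have "lincomb S0 \<gamma>' \<in> Domain G" if "\<gamma>' \<in> \<Gamma>0" for \<gamma>'
    using that sys(3) restrict unfolding \<Gamma>0_def by force
  ultimately obtain w where w: "\<forall>\<gamma>\<in>\<Gamma>0. \<forall>a. (lincomb S0 \<gamma>, a) \<in> G \<longrightarrow> a - (\<Sum>y\<in>S0. \<gamma> y * w y) \<in> ideal_pow M i0"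
    using approximableD[OF G \<open>finite S0\<close>, of \<Gamma>0 i0] by blast
  have "w x \<in> approx_values M G x S \<Gamma> i" if t: "(S, \<Gamma>, i) \<in> T" for S \<Gamma> i
  proof -
    have "i \<le> i0"
      unfolding i0_def using member_le_sum[OF t _ T(1), of "\<lambda>(S, \<Gamma>, i). i"] by simp
    have "a - (\<Sum>y\<in>S. \<gamma> y * w y) \<in> ideal_pow M i" if "\<gamma> \<in> \<Gamma>" "(lincomb S \<gamma>, a) \<in> G" for \<gamma> a
    proof -
      have "?restrict S \<gamma> \<in> \<Gamma>0"
        unfolding \<Gamma>0_def using t that(1) by blast
      then have "a - (\<Sum>y\<in>S0. ?restrict S \<gamma> y * w y) \<in> ideal_pow M i0"
        using w that(2) restrict[OF t] by simp
      moreover have "(\<Sum>y\<in>S0. ?restrict S \<gamma> y * w y) = (\<Sum>y\<in>S. \<gamma> y * w y)"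
        by (rule sum_restricted_coeffs[OF \<open>finite S0\<close> sub[OF t]])
      ultimately show ?thesis
        using ideal_pow_antimono[OF \<open>i \<le> i0\<close>] by auto
    qed
    then show ?thesis
      unfolding approx_values_def by blast
  qed
  then show ?thesis
    by blast
qed

definition point_extension ::
    "(('b \<Rightarrow> 'a::comm_ring_1) \<times> 'a) set \<Rightarrow> ('b \<Rightarrow> 'a) \<Rightarrow> 'a \<Rightarrow> (('b \<Rightarrow> 'a) \<times> 'a) set" where
  "point_extension G x v = {((\<lambda>n. d n + c * x n), b + c * v) | d b c. (d, b) \<in> G}"

lemma point_extensionI: "(d, b) \<in> G \<Longrightarrow> ((\<lambda>n. d n + c * x n), b + c * v) \<in> point_extension G x v"
  unfolding point_extension_def by blast

lemma point_extensionE: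
  assumes "(z, a) \<in> point_extension G x v"
  obtains d b c where "(d, b) \<in> G" "z = (\<lambda>n. d n + c * x n)" "a = b + c * v"
  using assms unfolding point_extension_def by blast

lemma subset_point_extension: "G \<subseteq> point_extension G x v"
proof
  fix p assume "p \<in> G"
  then show "p \<in> point_extension G x v"
    using point_extensionI[of "fst p" "snd p" G 0 x v] by simp
qed

lemma in_Domain_point_extension: "partial_hom G \<Longrightarrow> x \<in> Domain (point_extension G x v)"
  using point_extensionI[of "\<lambda>_. 0" 0 G 1 x v] unfolding partial_hom_def by auto

lemma single_valued_point_extension:
  assumes G: "partial_hom G" and consistent: "\<And>c b. ((\<lambda>n. c * x n), b) \<in> G \<Longrightarrow> b = c * v"
  shows "single_valued (point_extension G x v)"
proof (rule single_valuedI)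
  fix z a a' assume za: "(z, a) \<in> point_extension G x v" "(z, a') \<in> point_extension G x v"
  obtain d b c where d: "(d, b) \<in> G" "z = (\<lambda>n. d n + c * x n)" "a = b + c * v"
    using za(1) by (rule point_extensionE)
  obtain d' b' c' where d': "(d', b') \<in> G" "z = (\<lambda>n. d' n + c' * x n)" "a' = b' + c' * v"
    using za(2) by (rule point_extensionE)
  have "d' n + (- 1) * d n = (c - c') * x n" for n
  proof -
    have "d' n + (- 1) * d n = (d' n + c' * x n) - (d n + c' * x n)"
      by (simp add: algebra_simps)
    also have "d' n + c' * x n = d n + c * x n"
      using d(2) d'(2) by (metis (no_types))
    finally show ?thesis
      by (simp add: algebra_simps)
  qed
  moreover have "((\<lambda>n. d' n + (- 1) * d n), b' + (- 1) * b) \<in> G"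
    by (rule partial_hom_add[OF G d'(1) partial_hom_scale[OF G d(1)]])
  ultimately have "b' - b = (c - c') * v"
    using consistent by simp
  then have "b' = (c - c') * v + b"
    by (metis diff_add_cancel)
  then show "a = a'"
    using d(3) d'(3) by (simp add: algebra_simps)
qed

lemma partial_hom_point_extension:
  assumes G: "partial_hom G" and consistent: "\<And>c b. ((\<lambda>n. c * x n), b) \<in> G \<Longrightarrow> b = c * v"
  shows "partial_hom (point_extension G x v)"
proof -
  have "single_valued (point_extension G x v)"
    by (rule single_valued_point_extension[OF G consistent])
  moreover have "((\<lambda>_. 0), 0) \<in> point_extension G x v"
    using subset_point_extension G unfolding partial_hom_def by blast
  moreover have "((\<lambda>n. z n + z' n), a + a') \<in> point_extension G x v"
    if za: "(z, a) \<in> point_extension G x v" "(z', a') \<in> point_extension G x v" for z a z' a'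
  proof -
    obtain d b c where "(d, b) \<in> G" "z = (\<lambda>n. d n + c * x n)" "a = b + c * v"
      using za(1) by (rule point_extensionE)
    moreover obtain d' b' c' where "(d', b') \<in> G" "z' = (\<lambda>n. d' n + c' * x n)" "a' = b' + c' * v"
      using za(2) by (rule point_extensionE)
    ultimately show ?thesis
      using point_extensionI[OF partial_hom_add[OF G], of d b d' b' "c + c'" x v]
      by (simp add: algebra_simps)
  qed
  moreover have "((\<lambda>n. r * z n), r * a) \<in> point_extension G x v"
    if za: "(z, a) \<in> point_extension G x v" for r z a
  proof -
    obtain d b c where "(d, b) \<in> G" "z = (\<lambda>n. d n + c * x n)" "a = b + c * v"
      using za by (rule point_extensionE)
    then show ?thesis
      using point_extensionI[OF partial_hom_scale[OF G], of d b r "r * c" x v]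
      by (simp add: algebra_simps)
  qed
  ultimately show ?thesis
    unfolding partial_hom_def by blast
qed

lemma Domain_point_extension_choice:
  assumes "\<forall>\<beta>\<in>E. f \<beta> \<in> Domain (point_extension G x v)"
  shows "\<exists>d b c. \<forall>\<beta>\<in>E. (d \<beta>, b \<beta>) \<in> G \<and> f \<beta> = (\<lambda>n. d \<beta> n + c \<beta> * x n)"
proof -
  have "\<forall>\<beta>\<in>E. \<exists>p. (fst p, fst (snd p)) \<in> G \<and> f \<beta> = (\<lambda>n. fst p n + snd (snd p) * x n)"
  proof
    fix \<beta> assume "\<beta> \<in> E"
    then obtain a where "(f \<beta>, a) \<in> point_extension G x v"
      using assms by blast
    then obtain d b c where "(d, b) \<in> G" "f \<beta> = (\<lambda>n. d n + c * x n)"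
      by (rule point_extensionE)
    then show "\<exists>p. (fst p, fst (snd p)) \<in> G \<and> f \<beta> = (\<lambda>n. fst p n + snd (snd p) * x n)"
      by (intro exI[of _ "(d, b, c)"]) simp
  qed
  from bchoice[OF this] obtain p
    where "\<forall>\<beta>\<in>E. (fst (p \<beta>), fst (snd (p \<beta>))) \<in> G \<and> f \<beta> = (\<lambda>n. fst (p \<beta>) n + snd (snd (p \<beta>)) * x n)" ..
  then show ?thesis
    by (intro exI[of _ "\<lambda>\<beta>. fst (p \<beta>)"] exI[of _ "\<lambda>\<beta>. fst (snd (p \<beta>))"] exI[of _ "\<lambda>\<beta>. snd (snd (p \<beta>))"])
qed

lemma approximable_point_extension:
  assumes G: "partial_hom G" and G': "partial_hom (point_extension G x v)"
    and v: "\<And>S \<Gamma> i. finite_system G S \<Gamma> \<Longrightarrow> x \<in> S \<Longrightarrow> v \<in> approx_values M G x S \<Gamma> i"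
  shows "approximable M (point_extension G x v)"
  unfolding approximable_def
proof (intro allI impI)
  fix S E i assume S: "finite S" and E: "finite E" and dom: "\<forall>\<beta>\<in>E. lincomb S \<beta> \<in> Domain (point_extension G x v)"
  obtain d b c where dbc: "\<And>\<beta>. \<beta> \<in> E \<Longrightarrow> (d \<beta>, b \<beta>) \<in> G"
      "\<And>\<beta>. \<beta> \<in> E \<Longrightarrow> lincomb S \<beta> = (\<lambda>n. d \<beta> n + c \<beta> * x n)"
    using Domain_point_extension_choice[OF dom] by blast
  \<comment> \<open>moving the \<open>x\<close>-part of each combination into the coefficients leaves a combination in the domain of \<open>G\<close>\<close>
  define shift where "shift \<beta> y = (if y \<in> S then \<beta> y else 0) - (if y = x then c \<beta> else 0)" for \<beta> y
  have shift_sum: "(\<Sum>y\<in>insert x S. shift \<beta> y * f y) = (\<Sum>y\<in>S. \<beta> y * f y) - c \<beta> * f x" for \<beta> f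
    unfolding shift_def by (rule sum_shifted_coeffs[OF S])
  have lincomb_shift: "lincomb (insert x S) (shift \<beta>) = d \<beta>" if "\<beta> \<in> E" for \<beta>
    using dbc(2)[OF that] unfolding lincomb_def shift_sum by (simp add: fun_eq_iff lincomb_def)
  have "finite_system G (insert x S) (shift ` E)"
    unfolding finite_system_def using S E dbc(1) lincomb_shift by auto
  then obtain w where w: "w x = v"
    "\<And>\<gamma> a. \<gamma> \<in> shift ` E \<Longrightarrow> (lincomb (insert x S) \<gamma>, a) \<in> G \<Longrightarrow> a - (\<Sum>y\<in>insert x S. \<gamma> y * w y) \<in> ideal_pow M i"
    using v[of "insert x S" "shift ` E" i] unfolding approx_values_def by blast
  have "a - (\<Sum>y\<in>S. \<beta> y * w y) \<in> ideal_pow M i"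
    if \<beta>: "\<beta> \<in> E" and a: "(lincomb S \<beta>, a) \<in> point_extension G x v" for \<beta> a
  proof -
    have "(lincomb S \<beta>, b \<beta> + c \<beta> * v) \<in> point_extension G x v"
      unfolding dbc(2)[OF \<beta>] by (rule point_extensionI[OF dbc(1)[OF \<beta>]])
    then have "a = b \<beta> + c \<beta> * v"
      using partial_hom_unique[OF G' a] by blast
    moreover have "(\<Sum>y\<in>insert x S. shift \<beta> y * w y) = (\<Sum>y\<in>S. \<beta> y * w y) - c \<beta> * v"
      using shift_sum[of \<beta> w] w(1) by simp
    ultimately have "a - (\<Sum>y\<in>S. \<beta> y * w y) = b \<beta> - (\<Sum>y\<in>insert x S. shift \<beta> y * w y)"
      by (simp add: algebra_simps)
    moreover have "b \<beta> - (\<Sum>y\<in>insert x S. shift \<beta> y * w y) \<in> ideal_pow M i"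
      using w(2)[of "shift \<beta>" "b \<beta>"] \<beta> dbc(1) lincomb_shift by simp
    ultimately show ?thesis
      by simp
  qed
  then show "\<exists>w. \<forall>\<beta>\<in>E. \<forall>a. (lincomb S \<beta>, a) \<in> point_extension G x v \<longrightarrow> a - (\<Sum>y\<in>S. \<beta> y * w y) \<in> ideal_pow M i"
    by blast
qed

lemma total_partial_hom_linear:
  assumes H: "partial_hom H" "Domain H = UNIV"
  shows "\<exists>\<phi>. (\<forall>z a. (z, a) \<in> H \<longrightarrow> \<phi> z = a) \<and>
    (\<forall>x y. \<phi> (\<lambda>n. x n + y n) = \<phi> x + \<phi> y) \<and> (\<forall>a x. \<phi> (\<lambda>n. a * x n) = a * \<phi> x)"
proof -
  have "\<forall>z. \<exists>a. (z, a) \<in> H"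
    using H(2) by blast
  from choice[OF this] obtain \<phi> where "\<forall>z. (z, \<phi> z) \<in> H" ..
  then have \<phi>: "\<And>z. (z, \<phi> z) \<in> H"
    by blast
  have \<phi>_eq: "\<phi> z = a" if "(z, a) \<in> H" for z a
    using partial_hom_unique[OF H(1) \<phi> that] .
  moreover have "\<phi> (\<lambda>n. x n + y n) = \<phi> x + \<phi> y" for x y
    by (rule \<phi>_eq[OF partial_hom_add[OF H(1) \<phi> \<phi>]])
  moreover have "\<phi> (\<lambda>n. a * x n) = a * \<phi> x" for a x
    by (rule \<phi>_eq[OF partial_hom_scale[OF H(1) \<phi>]])
  ultimately show ?thesis
    by blast
qed

context complete_noetherian_local
begin

lemma exists_universal_approx_value:
  assumes G: "approximable M G"
  obtains v where "\<And>S \<Gamma> i. finite_system G S \<Gamma> \<Longrightarrow> x \<in> S \<Longrightarrow> v \<in> approx_values M G x S \<Gamma> i"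
proof -
  let ?T = "{(S, \<Gamma>, i). finite_system G S \<Gamma> \<and> x \<in> S}"
  let ?value_set = "\<lambda>(S, \<Gamma>, i). approx_values M G x S \<Gamma> i"
  have "\<Inter>(?value_set ` ?T) \<noteq> {}"
  proof (rule Inter_adic_cosets_nonempty)
    fix X assume "X \<in> ?value_set ` ?T"
    then obtain S \<Gamma> i where "X = approx_values M G x S \<Gamma> i" "finite_system G S \<Gamma>" "x \<in> S"
      by force
    then show "\<exists>i. adic_coset M i X"
      using adic_coset_approx_values[OF G] by blast
  next
    fix \<G> assume "\<G> \<subseteq> ?value_set ` ?T" "finite \<G>"
    then obtain T where T: "T \<subseteq> ?T" "finite T" "\<G> = ?value_set ` T"
      by (meson finite_subset_image)
    then obtain v where "\<forall>(S, \<Gamma>, i)\<in>T. v \<in> approx_values M G x S \<Gamma> i"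
      using approx_values_finite_Inter[OF G T(2), of x] by auto
    then have "v \<in> \<Inter>\<G>"
      unfolding T(3) by auto
    then show "\<Inter>\<G> \<noteq> {}"
      by blast
  qed
  then obtain v where v: "v \<in> \<Inter>(?value_set ` ?T)"
    by blast
  have "v \<in> approx_values M G x S \<Gamma> i" if sys: "finite_system G S \<Gamma>" "x \<in> S" for S \<Gamma> i
    using v sys by force
  then show thesis
    by (rule that)
qed

lemma approx_value_consistent:
  assumes v: "\<And>S \<Gamma> i. finite_system G S \<Gamma> \<Longrightarrow> x \<in> S \<Longrightarrow> v \<in> approx_values M G x S \<Gamma> i"
    and cx: "((\<lambda>n. c * x n), b) \<in> G"
  shows "b = c * v"
proof -
  have comb: "lincomb {x} (\<lambda>_. c) = (\<lambda>n. c * x n)"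
    by (simp add: lincomb_def)
  then have "finite_system G {x} {\<lambda>_. c}"
    using cx unfolding finite_system_def by auto
  then have "b - c * v \<in> ideal_pow M i" for i
    using v[of "{x}" "{\<lambda>_. c}" i] cx unfolding approx_values_def by (auto simp: comb)
  then have "b - c * v \<in> (\<Inter>i. ideal_pow M i)"
    by blast
  then show ?thesis
    using complete unfolding adically_complete_def by simp
qed

lemma approximable_hom_extend_to_point:
  assumes G: "partial_hom G" "approximable M G"
  obtains H where "G \<subseteq> H" "partial_hom H" "approximable M H" "x \<in> Domain H"
proof -
  obtain v where v: "\<And>S \<Gamma> i. finite_system G S \<Gamma> \<Longrightarrow> x \<in> S \<Longrightarrow> v \<in> approx_values M G x S \<Gamma> i"
    using exists_universal_approx_value[OF G(2)] by blast
  have hom: "partial_hom (point_extension G x v)"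
    using partial_hom_point_extension[OF G(1) approx_value_consistent[OF v]] by blast
  show thesis
  proof (rule that)
    show "G \<subseteq> point_extension G x v"
      by (rule subset_point_extension)
    show "approximable M (point_extension G x v)"
      by (rule approximable_point_extension[OF G(1) hom v])
    show "x \<in> Domain (point_extension G x v)"
      by (rule in_Domain_point_extension[OF G(1)])
  qed (rule hom)
qed

theorem approximable_hom_extends:
  assumes G: "partial_hom G" "approximable M G"
  obtains H where "G \<subseteq> H" "partial_hom H" "approximable M H" "Domain H = UNIV"
proof -
  let ?\<A> = "{H. G \<subseteq> H \<and> partial_hom H \<and> approximable M H}"
  have "\<Union>\<C> \<in> ?\<A>" if "\<C> \<noteq> {}" "subset.chain ?\<A> \<C>" for \<C>
  proof -
    have "\<And>H. H \<in> \<C> \<Longrightarrow> partial_hom H \<and> approximable M H" "\<And>H. H \<in> \<C> \<Longrightarrow> G \<subseteq> H"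
      using that(2) unfolding subset.chain_def by auto
    then show ?thesis
      using partial_hom_Union_chain[OF that] approximable_Union_chain[OF that] that(1) by blast
  qed
  moreover have "G \<in> ?\<A>"
    using G by blast
  ultimately obtain H where H: "H \<in> ?\<A>" and max: "\<forall>H'\<in>?\<A>. H \<subseteq> H' \<longrightarrow> H' = H"
    using subset_Zorn_nonempty[of ?\<A>] by blast
  have "x \<in> Domain H" for x
  proof -
    obtain H' where "H \<subseteq> H'" "partial_hom H'" "approximable M H'" "x \<in> Domain H'"
      using approximable_hom_extend_to_point[of H x] H by blast
    then show ?thesis
      using max H by blast
  qed
  then show thesis
    using that H by blast
qed

end

section \<open>The splitting\<close>

definition inclusion_graph :: "(nat \<Rightarrow> 'a::comm_ring_1 set) \<Rightarrow> ((nat \<Rightarrow> 'a) \<times> 'a) set" where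
  "inclusion_graph I = {(z, a). \<forall>\<^sub>F n in sequentially. z n - a \<in> I n}"

lemma inclusion_graphI: "\<forall>\<^sub>F n in sequentially. z n - a \<in> I n \<Longrightarrow> (z, a) \<in> inclusion_graph I"
  by (simp add: inclusion_graph_def)

lemma eventually_mem_ideals_eq_zero:
  assumes sep: "(\<Inter>i. ideal_pow M i) = {0}" and lim: "\<And>i. \<forall>\<^sub>F n in sequentially. I n \<subseteq> ideal_pow M i"
    and a: "\<forall>\<^sub>F n in sequentially. a \<in> I n"
  shows "a = 0"
proof -
  have "a \<in> ideal_pow M i" for i
  proof -
    have "\<forall>\<^sub>F n in sequentially. a \<in> ideal_pow M i"
      using eventually_conj[OF a lim[of i]] by (rule eventually_mono) blast
    then show ?thesis
      by simp
  qed
  then show ?thesis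
    using sep by blast
qed

lemma partial_hom_inclusion_graph:
  assumes I: "\<And>n. is_ideal (I n)" and sep: "(\<Inter>i. ideal_pow M i) = {0}"
    and lim: "\<And>i. \<forall>\<^sub>F n in sequentially. I n \<subseteq> ideal_pow M i"
  shows "partial_hom (inclusion_graph I)"
proof -
  have "single_valued (inclusion_graph I)"
  proof (rule single_valuedI)
    fix z a b assume "(z, a) \<in> inclusion_graph I" "(z, b) \<in> inclusion_graph I"
    then have "\<forall>\<^sub>F n in sequentially. z n - a \<in> I n \<and> z n - b \<in> I n"
      unfolding inclusion_graph_def by (simp add: eventually_conj)
    then have "\<forall>\<^sub>F n in sequentially. b - a \<in> I n"
    proof (rule eventually_mono)
      fix n assume "z n - a \<in> I n \<and> z n - b \<in> I n"
      then have "(z n - a) - (z n - b) \<in> I n"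
        using ideal_diff[OF I] by blast
      then show "b - a \<in> I n"
        by simp
    qed
    then have "b - a = 0"
      by (rule eventually_mem_ideals_eq_zero[OF sep lim])
    then show "a = b"
      by simp
  qed
  moreover have "((\<lambda>n. z n + z' n), a + a') \<in> inclusion_graph I"
    if "(z, a) \<in> inclusion_graph I" "(z', a') \<in> inclusion_graph I" for z a z' a'
  proof -
    have "\<forall>\<^sub>F n in sequentially. z n - a \<in> I n \<and> z' n - a' \<in> I n"
      using that unfolding inclusion_graph_def by (simp add: eventually_conj)
    then have "\<forall>\<^sub>F n in sequentially. (z n - a) + (z' n - a') \<in> I n"
      by (rule eventually_mono) (simp add: ideal_add[OF I])
    then show ?thesis
      unfolding inclusion_graph_def by (simp add: algebra_simps)
  qed
  moreover have "((\<lambda>n. r * z n), r * a) \<in> inclusion_graph I" if "(z, a) \<in> inclusion_graph I" for r z a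
  proof -
    have "\<forall>\<^sub>F n in sequentially. r * (z n - a) \<in> I n"
      using that unfolding inclusion_graph_def by (auto elim: eventually_mono simp: ideal_mult_left[OF I])
    then show ?thesis
      unfolding inclusion_graph_def by (simp add: algebra_simps)
  qed
  moreover have "((\<lambda>_. 0), 0) \<in> inclusion_graph I"
    unfolding inclusion_graph_def using ideal_zero[OF I] by simp
  ultimately show ?thesis
    unfolding partial_hom_def by blast
qed

lemma approximable_inclusion_graph:
  assumes hom: "partial_hom (inclusion_graph I)"
    and lim: "\<And>i. \<forall>\<^sub>F n in sequentially. I n \<subseteq> ideal_pow M i"
  shows "approximable M (inclusion_graph I)"
  unfolding approximable_def
proof (intro allI impI)
  fix S E i assume S: "finite S" and E: "finite E" and dom: "\<forall>\<beta>\<in>E. lincomb S \<beta> \<in> Domain (inclusion_graph I)"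
  then have "\<forall>\<beta>\<in>E. \<exists>a. (lincomb S \<beta>, a) \<in> inclusion_graph I"
    by blast
  then obtain f where f: "\<forall>\<beta>\<in>E. (lincomb S \<beta>, f \<beta>) \<in> inclusion_graph I"
    by (auto dest: bchoice)
  then have "\<forall>\<^sub>F n in sequentially. \<forall>\<beta>\<in>E. lincomb S \<beta> n - f \<beta> \<in> I n"
    unfolding inclusion_graph_def by (simp add: eventually_ball_finite_distrib[OF E])
  then have "\<forall>\<^sub>F n in sequentially. (\<forall>\<beta>\<in>E. lincomb S \<beta> n - f \<beta> \<in> I n) \<and> I n \<subseteq> ideal_pow M i"
    using lim by (rule eventually_conj)
  then obtain N where "\<forall>n\<ge>N. (\<forall>\<beta>\<in>E. lincomb S \<beta> n - f \<beta> \<in> I n) \<and> I n \<subseteq> ideal_pow M i"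
    unfolding eventually_sequentially by blast
  then have N: "\<forall>\<beta>\<in>E. lincomb S \<beta> N - f \<beta> \<in> I N" "I N \<subseteq> ideal_pow M i"
    by auto
  \<comment> \<open>evaluation at a single far-out index \<open>N\<close> approximates the graph modulo \<open>M\<^sup>i\<close>\<close>
  have "a - (\<Sum>y\<in>S. \<beta> y * y N) \<in> ideal_pow M i"
    if "\<beta> \<in> E" "(lincomb S \<beta>, a) \<in> inclusion_graph I" for \<beta> a
  proof -
    have "a = f \<beta>"
      using partial_hom_unique[OF hom] f that by blast
    then have "- (lincomb S \<beta> N - a) \<in> ideal_pow M i"
      using N that(1) by (blast intro: ideal_uminus[OF is_ideal_ideal_pow])
    then show ?thesis
      by (simp add: lincomb_def)
  qed
  then show "\<exists>w. \<forall>\<beta>\<in>E. \<forall>a. (lincomb S \<beta>, a) \<in> inclusion_graph I \<longrightarrow> a - (\<Sum>y\<in>S. \<beta> y * w y) \<in> ideal_pow M i"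
    by (intro exI[of _ "\<lambda>y. y N"]) blast
qed

theorem proposition2p3:
  fixes M :: "'a::idom set" and I :: "nat \<Rightarrow> 'a set"
  assumes noeth: "noetherian_ring TYPE('a)"
    and loc: "local_ring_max M"
    and compl: "adically_complete M"
    and normal: "normal_domain TYPE('a)"
    and prime: "\<And>n. prime_ideal (I n)"
    and nonzero: "\<And>n. I n \<noteq> {0}"
    and lim: "\<And>i. i \<ge> 1 \<Longrightarrow> \<exists>N. \<forall>n\<ge>N. I n \<subseteq> ideal_pow M i"
  shows "(\<forall>a. (\<forall>\<^sub>F n in sequentially. a \<in> I n) \<longrightarrow> a = 0) \<and>
         (\<exists>\<phi> :: (nat \<Rightarrow> 'a) \<Rightarrow> 'a.
            (\<forall>x y. \<phi> (\<lambda>n. x n + y n) = \<phi> x + \<phi> y) \<and>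
            (\<forall>a x. \<phi> (\<lambda>n. a * x n) = a * \<phi> x) \<and>
            (\<forall>x. (\<forall>\<^sub>F n in sequentially. x n \<in> I n) \<longrightarrow> \<phi> x = 0) \<and>
            (\<forall>a. \<phi> (\<lambda>n. a) = a))"
proof -
  interpret complete_noetherian_local M
    using noeth loc compl by unfold_locales
  have I: "\<And>n. is_ideal (I n)"
    using prime unfolding prime_ideal_def by blast
  have sep: "(\<Inter>i. ideal_pow M i) = {0}"
    using compl unfolding adically_complete_def by blast
  have lim': "\<forall>\<^sub>F n in sequentially. I n \<subseteq> ideal_pow M i" for i
    using lim[of i] by (cases i) (auto simp: eventually_sequentially)
  note hom = partial_hom_inclusion_graph[OF I sep lim']
  obtain H where H: "inclusion_graph I \<subseteq> H" "partial_hom H" "approximable M H" "Domain H = UNIV"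
    by (rule approximable_hom_extends[OF hom approximable_inclusion_graph[OF hom lim']])
  obtain \<phi> where \<phi>: "\<forall>z a. (z, a) \<in> H \<longrightarrow> \<phi> z = a"
    "\<forall>x y. \<phi> (\<lambda>n. x n + y n) = \<phi> x + \<phi> y" "\<forall>a x. \<phi> (\<lambda>n. a * x n) = a * \<phi> x"
    using total_partial_hom_linear[OF H(2,4)] by blast
  have "\<phi> x = 0" if "\<forall>\<^sub>F n in sequentially. x n \<in> I n" for x
    using \<phi>(1) H(1) inclusion_graphI[of x 0 I] that by auto
  moreover have "\<phi> (\<lambda>n. a) = a" for a
    using \<phi>(1) H(1) inclusion_graphI[of "\<lambda>n. a" a I] ideal_zero[OF I] by auto
  ultimately show ?thesis
    using eventually_mem_ideals_eq_zero[OF sep lim'] \<phi>(2,3) by blast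
qed

end
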